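(* Under the standing assumptions below, with $I_d$ the identity operator on $\mathcal{W}^{k,p}(I)$, for every $f\in\mathcal{W}^{k,p}(I)$, $$\|\mathcal{F}^\alpha(f)-f\|_{\mathcal{W}^{k,p}}\le\frac{K}{1-K}\,\|I_d-L\|\,\|f\|_{\mathcal{W}^{k,p}}.$$
   Context: Standing assumptions: $k\in\mathbb{N}\cup\{0\}$, $1\le p\le\infty$; $I=[x_1,x_N]$, $N>2$, $x_1<\dots<x_N$, $I_i=[x_i,x_{i+1})$ for $i\le N-2$, $I_{N-1}=[x_{N-1},x_N]$; $L_i(x)=a_ix+d_i$ is the affine map with $L_i(x_1)=x_i$, $L_i(x_N)=x_{i+1}$. $\mathcal{W}^{k,p}(I)$ is the Sobolev space of $g$ with weak derivatives $D^jg\in\mathcal{L}^p(I)$, $0\le j\le k$, with norm $[\sum_{j=0}^k\|D^jg\|_p^p]^{1/p}$ ($p<\infty$) or $\sum_{j=0}^k\|D^jg\|_\infty$ ($p=\infty$); its elements are identified with their $\mathcal{C}^{k-1}$ representatives. $L:\mathcal{W}^{k,p}(I)\to\mathcal{W}^{k,p}(I)$ is a bounded linear operator with $D^r(Lf)(x_1)=D^rf(x_1)$, $D^r(Lf)(x_N)=D^rf(x_N)$ for all $f$ and $0\le r\le k-1$. The scaling factors $\alpha_1,\dots,\alpha_{N-1}$ are real constants with $K<1$, where $K=[\sum_{i=1}^{N-1}|\alpha_i|^p/a_i^{kp-1}]^{1/p}$ if $1\le p<\infty$ and $K=\max_i|\alpha_i|/a_i^k$ if $p=\infty$. For $f\in\mathcal{W}^{k,p}(I)$,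 $f^\alpha=\mathcal{F}^\alpha(f)$ is the unique function in $\mathcal{W}^{k,p}(I)$ with $D^rf^\alpha(x_1)=D^rf(x_1)$, $D^rf^\alpha(x_N)=D^rf(x_N)$ ($0\le r\le k-1$) satisfying $f^\alpha(x)=f(x)+\alpha_i(f^\alpha-Lf)(L_i^{-1}(x))$ for $x\in I_i$, $i=1,\dots,N-1$; $\mathcal{F}^\alpha$ is called the $\alpha$-fractal operator. *)

theory Defs
  imports "HOL-Analysis.Analysis" "HOL-Probability.Essential_Supremum"
begin

definition in_Lp :: "real set \<Rightarrow> ennreal \<Rightarrow> (real \<Rightarrow> real) \<Rightarrow> bool" where
  "in_Lp I p h \<longleftrightarrow> h \<in> borel_measurable (lebesgue_on I) \<and>
     (if p = \<infinity> then esssup (lebesgue_on I) (\<lambda>t. ereal \<bar>h t\<bar>) < \<infinity>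
      else (\<integral>\<^sup>+ t. ennreal (\<bar>h t\<bar> powr enn2real p) \<partial>lebesgue_on I) < \<infinity>)"

definition Lp_norm :: "real set \<Rightarrow> ennreal \<Rightarrow> (real \<Rightarrow> real) \<Rightarrow> real" where
  "Lp_norm I p h =
     (if p = \<infinity> then real_of_ereal (esssup (lebesgue_on I) (\<lambda>t. ereal \<bar>h t\<bar>))
      else (enn2real (\<integral>\<^sup>+ t. ennreal (\<bar>h t\<bar> powr enn2real p) \<partial>lebesgue_on I))
             powr (1 / enn2real p))"

definition test_fun :: "real \<Rightarrow> real \<Rightarrow> (real \<Rightarrow> real) \<Rightarrow> bool" where
  "test_fun a b \<phi> \<longleftrightarrow> (\<forall>n t. ((deriv ^^ n) \<phi>) differentiable (at t)) \<and>
     (\<exists>c d. a < c \<and> d < b \<and> (\<forall>t. t \<notin> {c..d} \<longrightarrow> \<phi> t = 0))"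

definition weak_deriv :: "real \<Rightarrow> real \<Rightarrow> nat \<Rightarrow> (real \<Rightarrow> real) \<Rightarrow> (real \<Rightarrow> real) \<Rightarrow> bool" where
  "weak_deriv a b j g h \<longleftrightarrow>
     integrable (lebesgue_on {a..b}) g \<and> integrable (lebesgue_on {a..b}) h \<and>
     (\<forall>\<phi>. test_fun a b \<phi> \<longrightarrow>
        (\<integral>t. g t * (deriv ^^ j) \<phi> t \<partial>lebesgue_on {a..b}) =
        (-1) ^ j * (\<integral>t. h t * \<phi> t \<partial>lebesgue_on {a..b}))"

definition sobolev :: "real \<Rightarrow> real \<Rightarrow> nat \<Rightarrow> ennreal \<Rightarrow> (real \<Rightarrow> real) \<Rightarrow> bool" where
  "sobolev a b k p g \<longleftrightarrow> (\<forall>j\<le>k. \<exists>h. weak_deriv a b j g h \<and> in_Lp {a..b} p h)"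

text \<open>D^j g (a chosen representative; determined almost everywhere).\<close>
definition wD :: "real \<Rightarrow> real \<Rightarrow> ennreal \<Rightarrow> nat \<Rightarrow> (real \<Rightarrow> real) \<Rightarrow> real \<Rightarrow> real" where
  "wD a b p j g = (SOME h. weak_deriv a b j g h \<and> in_Lp {a..b} p h)"

definition sob_norm :: "real \<Rightarrow> real \<Rightarrow> nat \<Rightarrow> ennreal \<Rightarrow> (real \<Rightarrow> real) \<Rightarrow> real" where
  "sob_norm a b k p g =
     (if p = \<infinity> then (\<Sum>j\<le>k. Lp_norm {a..b} p (wD a b p j g))
      else (\<Sum>j\<le>k. Lp_norm {a..b} p (wD a b p j g) powr enn2real p) powr (1 / enn2real p))"

text \<open>Value at t of the continuous representative of D^r g (meaningful for r \<le> k-1).\<close>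
definition dval :: "real \<Rightarrow> real \<Rightarrow> nat \<Rightarrow> (real \<Rightarrow> real) \<Rightarrow> real \<Rightarrow> real" where
  "dval a b r g t = (THE c. \<exists>h. weak_deriv a b r g h \<and> continuous_on {a..b} h \<and> h t = c)"

definition ae_eq :: "real \<Rightarrow> real \<Rightarrow> (real \<Rightarrow> real) \<Rightarrow> (real \<Rightarrow> real) \<Rightarrow> bool" where
  "ae_eq a b f g \<longleftrightarrow> (AE t in lebesgue_on {a..b}. f t = g t)"

definition bounded_linear_sob ::
  "real \<Rightarrow> real \<Rightarrow> nat \<Rightarrow> ennreal \<Rightarrow> ((real \<Rightarrow> real) \<Rightarrow> (real \<Rightarrow> real)) \<Rightarrow> bool" where
  "bounded_linear_sob a b k p T \<longleftrightarrow>
     (\<forall>f. sobolev a b k p f \<longrightarrow> sobolev a b k p (T f)) \<and>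
     (\<forall>f g c d. sobolev a b k p f \<longrightarrow> sobolev a b k p g \<longrightarrow>
        ae_eq a b (T (\<lambda>t. c * f t + d * g t)) (\<lambda>t. c * T f t + d * T g t)) \<and>
     (\<exists>C. \<forall>f. sobolev a b k p f \<longrightarrow> sob_norm a b k p (T f) \<le> C * sob_norm a b k p f)"

definition opnorm_Id_minus ::
  "real \<Rightarrow> real \<Rightarrow> nat \<Rightarrow> ennreal \<Rightarrow> ((real \<Rightarrow> real) \<Rightarrow> (real \<Rightarrow> real)) \<Rightarrow> real" where
  "opnorm_Id_minus a b k p L =
     Sup {sob_norm a b k p (\<lambda>t. f t - L f t) | f. sobolev a b k p f \<and> sob_norm a b k p f \<le> 1}"

definition aff_a :: "(nat \<Rightarrow> real) \<Rightarrow> nat \<Rightarrow> nat \<Rightarrow> real" where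
  "aff_a x N i = (x (i+1) - x i) / (x N - x 1)"

definition aff_d :: "(nat \<Rightarrow> real) \<Rightarrow> nat \<Rightarrow> nat \<Rightarrow> real" where
  "aff_d x N i = x i - aff_a x N i * x 1"

definition aff_inv :: "(nat \<Rightarrow> real) \<Rightarrow> nat \<Rightarrow> nat \<Rightarrow> real \<Rightarrow> real" where
  "aff_inv x N i y = (y - aff_d x N i) / aff_a x N i"

definition subint :: "(nat \<Rightarrow> real) \<Rightarrow> nat \<Rightarrow> nat \<Rightarrow> real set" where
  "subint x N i = (if i \<le> N - 2 then {x i..<x (i+1)} else {x i..x (i+1)})"

definition Kconst :: "(nat \<Rightarrow> real) \<Rightarrow> nat \<Rightarrow> nat \<Rightarrow> ennreal \<Rightarrow> (nat \<Rightarrow> real) \<Rightarrow> real" where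
  "Kconst x N k p \<alpha> =
     (if p = \<infinity> then Max ((\<lambda>i. \<bar>\<alpha> i\<bar> / aff_a x N i ^ k) ` {1..N-1})
      else (\<Sum>i=1..N-1. \<bar>\<alpha> i\<bar> powr enn2real p / aff_a x N i powr (real k * enn2real p - 1))
             powr (1 / enn2real p))"

text \<open>g is the alpha-fractal function f^alpha of f (equalities understood almost everywhere,
  as elements of W^{k,p} are equivalence classes).\<close>
definition is_alpha_fractal ::
  "(nat \<Rightarrow> real) \<Rightarrow> nat \<Rightarrow> nat \<Rightarrow> ennreal \<Rightarrow> ((real \<Rightarrow> real) \<Rightarrow> (real \<Rightarrow> real)) \<Rightarrow>
   (nat \<Rightarrow> real) \<Rightarrow> (real \<Rightarrow> real) \<Rightarrow> (real \<Rightarrow> real) \<Rightarrow> bool" where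
  "is_alpha_fractal x N k p L \<alpha> f g \<longleftrightarrow>
     sobolev (x 1) (x N) k p g \<and>
     (\<forall>r<k. dval (x 1) (x N) r g (x 1) = dval (x 1) (x N) r f (x 1) \<and>
            dval (x 1) (x N) r g (x N) = dval (x 1) (x N) r f (x N)) \<and>
     (\<forall>i\<in>{1..N-1}. AE t in lebesgue. t \<in> subint x N i \<longrightarrow>
        g t = f t + \<alpha> i * (g (aff_inv x N i t) - L f (aff_inv x N i t)))"

end

theory Submission
  imports Defs
begin

text \<open>Put \<open>u = f\<^sup>\<alpha> - f\<close> and \<open>h = f\<^sup>\<alpha> - L f\<close>. The self-referential equation says
  \<open>u = \<alpha>\<^sub>i h \<circ> L\<^sub>i\<^sup>-\<^sup>1\<close> on the \<open>i\<close>-th piece, so by the chain rule for weak derivatives (made rigorous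
  through the fundamental lemma of the calculus of variations)
  \<open>D\<^sup>j u = \<alpha>\<^sub>i a\<^sub>i\<^sup>-\<^sup>j (D\<^sup>j h) \<circ> L\<^sub>i\<^sup>-\<^sup>1\<close> there. Changing variables piece by piece gives
  \<open>\<parallel>u\<parallel> \<le> K \<parallel>h\<parallel> \<le> K (\<parallel>u\<parallel> + \<parallel>f - L f\<parallel>)\<close>, and solving for \<open>\<parallel>u\<parallel>\<close> together with
  \<open>\<parallel>f - L f\<parallel> \<le> \<parallel>I\<^sub>d - L\<parallel> \<parallel>f\<parallel>\<close> yields the estimate.\<close>

section \<open>Smooth functions and cut-offs\<close>

definition differentiable_upto :: "nat \<Rightarrow> (real \<Rightarrow> real) \<Rightarrow> bool" where
  "differentiable_upto n f \<longleftrightarrow> (\<forall>m\<le>n. \<forall>t. (deriv ^^ m) f differentiable (at t))"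

lemma deriv_funpow_Suc: "(deriv ^^ Suc m) f = (deriv ^^ m) (deriv f)"
  unfolding funpow_Suc_right o_apply by (rule refl)

lemma smooth_iff_differentiable_upto:
  "(\<forall>n t. (deriv ^^ n) f differentiable (at t)) \<longleftrightarrow> (\<forall>n. differentiable_upto n f)"
  by (auto simp: differentiable_upto_def)

lemma differentiable_upto_0: "differentiable_upto 0 f \<longleftrightarrow> (\<forall>t. f differentiable (at t))"
  by (simp add: differentiable_upto_def)

lemma differentiable_upto_Suc:
  "differentiable_upto (Suc n) f \<longleftrightarrow> (\<forall>t. f differentiable (at t)) \<and> differentiable_upto n (deriv f)"
proof
  assume "differentiable_upto (Suc n) f"
  then show "(\<forall>t. f differentiable (at t)) \<and> differentiable_upto n (deriv f)"
    unfolding differentiable_upto_def by (metis Suc_le_mono deriv_funpow_Suc funpow_0 zero_le)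
next
  assume *: "(\<forall>t. f differentiable (at t)) \<and> differentiable_upto n (deriv f)"
  show "differentiable_upto (Suc n) f" unfolding differentiable_upto_def
  proof (intro allI impI)
    fix m t assume "m \<le> Suc n"
    with * show "(deriv ^^ m) f differentiable (at t)"
      unfolding differentiable_upto_def
      by (cases m) (auto simp del: funpow.simps simp add: deriv_funpow_Suc)
  qed
qed

lemma differentiable_upto_imp_differentiable:
  "differentiable_upto n f \<Longrightarrow> f differentiable (at t)"
  by (auto simp: differentiable_upto_def dest: spec[of _ 0])

lemma deriv_eq_fun: "(\<And>t. (f has_real_derivative f' t) (at t)) \<Longrightarrow> deriv f = f'"
  by (rule ext) (simp add: DERIV_imp_deriv)

lemma has_real_derivative_deriv:
  "f differentiable (at t) \<Longrightarrow> (f has_real_derivative deriv f t) (at t)"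
  using DERIV_deriv_iff_real_differentiable by blast

lemma differentiable_upto_add:
  "differentiable_upto n f \<Longrightarrow> differentiable_upto n g \<Longrightarrow> differentiable_upto n (\<lambda>t. f t + g t)"
proof (induction n arbitrary: f g)
  case 0 then show ?case by (auto simp: differentiable_upto_0)
next
  case (Suc n)
  then have "\<forall>t. f differentiable (at t)" "\<forall>t. g differentiable (at t)"
    by (auto simp: differentiable_upto_Suc)
  moreover from this have "deriv (\<lambda>t. f t + g t) = (\<lambda>t. deriv f t + deriv g t)"
    by (intro deriv_eq_fun) (auto intro!: derivative_eq_intros has_real_derivative_deriv)
  ultimately show ?case using Suc by (auto simp: differentiable_upto_Suc)
qed

lemma differentiable_upto_const: "differentiable_upto n (\<lambda>t. c)"
proof (induction n arbitrary: c)
  case (Suc n)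
  have "deriv (\<lambda>t. c) = (\<lambda>t. 0)" by (rule deriv_eq_fun) auto
  then show ?case using Suc by (auto simp: differentiable_upto_Suc)
qed (auto simp: differentiable_upto_0)

lemma differentiable_upto_mult:
  "differentiable_upto n f \<Longrightarrow> differentiable_upto n g \<Longrightarrow> differentiable_upto n (\<lambda>t. f t * g t)"
proof (induction n arbitrary: f g)
  case 0 then show ?case by (auto simp: differentiable_upto_0)
next
  case (Suc n)
  have df: "\<forall>t. f differentiable (at t)" and dg: "\<forall>t. g differentiable (at t)"
    using Suc.prems by (auto simp: differentiable_upto_Suc)
  have "deriv (\<lambda>t. f t * g t) = (\<lambda>t. deriv f t * g t + f t * deriv g t)"
    using df dg by (intro deriv_eq_fun) (auto intro!: derivative_eq_intros has_real_derivative_deriv)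
  moreover have "differentiable_upto n f" "differentiable_upto n g"
    using Suc.prems by (auto simp: differentiable_upto_def)
  then have "differentiable_upto n (\<lambda>t. deriv f t * g t + f t * deriv g t)"
    using Suc by (intro differentiable_upto_add Suc.IH) (auto simp: differentiable_upto_Suc)
  ultimately show ?case using df dg by (auto simp: differentiable_upto_Suc)
qed

lemma differentiable_upto_cmult: "differentiable_upto n f \<Longrightarrow> differentiable_upto n (\<lambda>t. c * f t)"
  using differentiable_upto_mult[OF differentiable_upto_const] by blast

lemma has_real_derivative_compose_affine:
  assumes "f differentiable (at (c * t + d))"
  shows "((\<lambda>t. f (c * t + d)) has_real_derivative c * deriv f (c * t + d)) (at t)"
proof -
  have "((\<lambda>t. c * t + d) has_real_derivative c) (at t)"
    by (auto intro!: derivative_eq_intros)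
  from DERIV_chain2[OF has_real_derivative_deriv[OF assms] this] show ?thesis
    by (simp add: mult.commute)
qed

lemma deriv_compose_affine:
  fixes f :: "real \<Rightarrow> real"
  assumes "\<forall>t. f differentiable (at t)"
  shows "deriv (\<lambda>t. f (c * t + d)) = (\<lambda>t. c * deriv f (c * t + d))"
proof (rule deriv_eq_fun)
  fix t
  show "((\<lambda>t. f (c * t + d)) has_real_derivative c * deriv f (c * t + d)) (at t)"
    using assms by (intro has_real_derivative_compose_affine) blast
qed

lemma differentiable_upto_compose_affine:
  "differentiable_upto n f \<Longrightarrow> differentiable_upto n (\<lambda>t. f (c * t + d))"
proof (induction n arbitrary: f)
  case 0
  then show ?case
    using has_real_derivative_compose_affine
    by (simp add: differentiable_upto_0) (meson real_differentiable_def)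
next
  case (Suc n)
  then have df: "\<forall>t. f differentiable (at t)" by (simp add: differentiable_upto_Suc)
  have "differentiable_upto n (\<lambda>t. c * deriv f (c * t + d))"
    using Suc by (auto simp: differentiable_upto_Suc intro: differentiable_upto_cmult)
  moreover have "(\<lambda>t. f (c * t + d)) differentiable (at t)" for t
    using df has_real_derivative_compose_affine by (meson real_differentiable_def)
  ultimately show ?case
    using df by (simp add: differentiable_upto_Suc deriv_compose_affine)
qed

lemma higher_deriv_cmult:
  assumes "\<forall>n. differentiable_upto n g"
  shows "(deriv ^^ j) (\<lambda>s. c * g s) = (\<lambda>s. c * (deriv ^^ j) g s)"
  using assms
proof (induction j arbitrary: g)
  case (Suc j)
  have "\<forall>t. g differentiable (at t)"
    using Suc.prems differentiable_upto_imp_differentiable by blast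
  then have "deriv (\<lambda>s. c * g s) = (\<lambda>s. c * deriv g s)"
    by (intro deriv_eq_fun) (auto intro!: derivative_eq_intros has_real_derivative_deriv)
  moreover have "\<forall>n. differentiable_upto n (deriv g)"
    using Suc.prems differentiable_upto_Suc by blast
  ultimately show ?case using Suc.IH
    by (simp del: funpow.simps add: deriv_funpow_Suc)
qed simp

lemma higher_deriv_compose_affine:
  assumes "\<forall>n. differentiable_upto n f"
  shows "(deriv ^^ j) (\<lambda>t. f (c * t + d)) = (\<lambda>t. c ^ j * (deriv ^^ j) f (c * t + d))"
  using assms
proof (induction j arbitrary: f)
  case (Suc j)
  have df: "\<forall>t. f differentiable (at t)"
    using Suc.prems differentiable_upto_imp_differentiable by blast
  have smooth_f': "\<forall>n. differentiable_upto n (deriv f)"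
    using Suc.prems differentiable_upto_Suc by blast
  then have "\<forall>n. differentiable_upto n (\<lambda>s. c * deriv f s)"
    by (auto intro: differentiable_upto_cmult)
  note IH = Suc.IH[OF this]
  have "(deriv ^^ Suc j) (\<lambda>t. f (c * t + d)) = (deriv ^^ j) (\<lambda>t. c * deriv f (c * t + d))"
    using df by (simp del: funpow.simps add: deriv_funpow_Suc deriv_compose_affine)
  also have "\<dots> = (\<lambda>t. c ^ j * (deriv ^^ j) (\<lambda>s. c * deriv f s) (c * t + d))"
    using IH by simp
  also have "\<dots> = (\<lambda>t. c ^ Suc j * (deriv ^^ Suc j) f (c * t + d))"
    using higher_deriv_cmult[OF smooth_f', of j c]
    by (simp del: funpow.simps add: deriv_funpow_Suc mult_ac)
  finally show ?case .
qed simp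

text \<open>For \<open>k = 0\<close> this is the classical flat function \<open>exp (-1/x)\<close>; the index \<open>k\<close> is there
  because the derivatives of the family stay in its linear span.\<close>
definition flat_exp :: "nat \<Rightarrow> real \<Rightarrow> real" where
  "flat_exp k x = (if x > 0 then inverse x ^ k * exp (- inverse x) else 0)"

lemma flat_exp_has_real_derivative_pos:
  assumes "x > 0"
  shows "(flat_exp k has_real_derivative (- real k * flat_exp (Suc k) x + flat_exp (Suc (Suc k)) x)) (at x)"
proof -
  have "((\<lambda>x. inverse x ^ k * exp (- inverse x)) has_real_derivative
        - real k * (inverse x ^ Suc k * exp (- inverse x)) + inverse x ^ Suc (Suc k) * exp (- inverse x)) (at x)"
    using assms
    by (auto intro!: derivative_eq_intros) (cases k; auto simp: field_simps power_Suc)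
  then have "(flat_exp k has_real_derivative
        - real k * (inverse x ^ Suc k * exp (- inverse x)) + inverse x ^ Suc (Suc k) * exp (- inverse x)) (at x)"
    by (rule has_field_derivative_transform_within_open[where S="{0<..}"])
       (use assms in \<open>auto simp: flat_exp_def\<close>)
  then show ?thesis using assms by (simp add: flat_exp_def)
qed

lemma flat_exp_has_real_derivative_neg:
  assumes "x < 0"
  shows "(flat_exp k has_real_derivative (- real k * flat_exp (Suc k) x + flat_exp (Suc (Suc k)) x)) (at x)"
proof -
  have "(flat_exp k has_real_derivative 0) (at x)"
    by (rule has_field_derivative_transform_within_open[where f="\<lambda>x. 0" and S="{..<0}"])
       (use assms in \<open>auto simp: flat_exp_def\<close>)
  then show ?thesis using assms by (simp add: flat_exp_def)
qed

lemma flat_exp_has_real_derivative_0: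
  "(flat_exp k has_real_derivative (- real k * flat_exp (Suc k) 0 + flat_exp (Suc (Suc k)) 0)) (at 0)"
proof -
  have "((\<lambda>y. (flat_exp k y - flat_exp k 0) / (y - 0)) \<longlongrightarrow> 0) (at (0::real))"
    unfolding filterlim_at_split
  proof
    have "eventually (\<lambda>y. 0 = (flat_exp k y - flat_exp k 0) / (y - 0)) (at_left (0::real))"
      unfolding eventually_at_filter by (auto simp: flat_exp_def)
    then show "((\<lambda>y. (flat_exp k y - flat_exp k 0) / (y - 0)) \<longlongrightarrow> 0) (at_left 0)"
      by (rule Lim_transform_eventually[rotated]) (rule tendsto_const)
  next
    have "((\<lambda>y. inverse y ^ Suc k / exp (inverse y)) \<longlongrightarrow> 0) (at_right (0::real))"
      using tendsto_power_div_exp_0 by (rule filterlim_compose) (rule filterlim_inverse_at_top_right)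
    moreover have "eventually (\<lambda>y. inverse y ^ Suc k / exp (inverse y)
        = (flat_exp k y - flat_exp k 0) / (y - 0)) (at_right (0::real))"
      unfolding eventually_at_filter by (auto simp: flat_exp_def exp_minus field_simps power_Suc)
    ultimately show "((\<lambda>y. (flat_exp k y - flat_exp k 0) / (y - 0)) \<longlongrightarrow> 0) (at_right 0)"
      by (rule Lim_transform_eventually)
  qed
  then show ?thesis by (simp add: has_field_derivative_iff flat_exp_def)
qed

lemma flat_exp_has_real_derivative:
  "(flat_exp k has_real_derivative (- real k * flat_exp (Suc k) x + flat_exp (Suc (Suc k)) x)) (at x)"
  using flat_exp_has_real_derivative_pos flat_exp_has_real_derivative_neg
    flat_exp_has_real_derivative_0
  by (cases x "0::real" rule: linorder_cases) auto

lemma differentiable_upto_flat_exp: "differentiable_upto n (flat_exp k)"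
proof (induction n arbitrary: k)
  case 0 then show ?case
    using flat_exp_has_real_derivative by (auto simp: differentiable_upto_0 real_differentiable_def)
next
  case (Suc n)
  have "deriv (flat_exp k) = (\<lambda>x. - real k * flat_exp (Suc k) x + flat_exp (Suc (Suc k)) x)"
    by (rule deriv_eq_fun) (rule flat_exp_has_real_derivative)
  moreover have "differentiable_upto n (\<lambda>x. - real k * flat_exp (Suc k) x + flat_exp (Suc (Suc k)) x)"
    by (intro differentiable_upto_add differentiable_upto_cmult Suc.IH)
  ultimately show ?case
    using flat_exp_has_real_derivative by (auto simp: differentiable_upto_Suc real_differentiable_def)
qed

definition smooth_step :: "real \<Rightarrow> real" where "smooth_step = flat_exp 0"

lemma differentiable_upto_smooth_step: "differentiable_upto n smooth_step"
  by (simp add: smooth_step_def differentiable_upto_flat_exp)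

lemma smooth_step_nonneg: "0 \<le> smooth_step x"
  by (simp add: smooth_step_def flat_exp_def)

lemma smooth_step_le_1: "smooth_step x \<le> 1"
  by (simp add: smooth_step_def flat_exp_def)

lemma smooth_step_eq_0: "x \<le> 0 \<Longrightarrow> smooth_step x = 0"
  by (simp add: smooth_step_def flat_exp_def)

lemma tendsto_smooth_step_at_top: "(smooth_step \<longlongrightarrow> 1) at_top"
proof -
  have "((\<lambda>x::real. exp (- inverse x)) \<longlongrightarrow> exp (- 0)) at_top"
    by (intro tendsto_intros tendsto_inverse_0_at_top filterlim_ident)
  moreover have "eventually (\<lambda>x::real. exp (- inverse x) = smooth_step x) at_top"
    using eventually_gt_at_top[of 0] by eventually_elim (simp add: smooth_step_def flat_exp_def)
  ultimately show ?thesis by (simp add: Lim_transform_eventually)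
qed

lemma test_fun_differentiable_upto: "test_fun a b \<phi> \<Longrightarrow> differentiable_upto n \<phi>"
  by (auto simp: test_fun_def differentiable_upto_def)

lemma deriv_eq_0_outside:
  fixes c d t :: real
  assumes "\<forall>t. t \<notin> {c..d} \<longrightarrow> f t = 0" "t \<notin> {c..d}"
  shows "deriv f t = 0"
proof -
  from assms(2) consider "t < c" | "d < t" by fastforce
  then have "(f has_real_derivative 0) (at t)"
  proof cases
    case 1 show ?thesis
      by (rule has_field_derivative_transform_within_open[of "\<lambda>x. 0" 0 t "{..<c}"])
         (use assms 1 in auto)
  next
    case 2 show ?thesis
      by (rule has_field_derivative_transform_within_open[of "\<lambda>x. 0" 0 t "{d<..}"])
         (use assms 2 in auto)
  qed
  then show ?thesis by (rule DERIV_imp_deriv)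
qed

lemma higher_deriv_eq_0_outside:
  fixes c d t :: real
  assumes "\<forall>t. t \<notin> {c..d} \<longrightarrow> f t = 0" "t \<notin> {c..d}"
  shows "(deriv ^^ j) f t = 0"
  using assms(2)
proof (induction j arbitrary: t)
  case (Suc j) then show ?case using deriv_eq_0_outside[of c d "(deriv ^^ j) f" t] by simp
qed (use assms(1) in simp)

lemma test_fun_higher_deriv_eq_0_outside:
  fixes c d :: real
  assumes "test_fun c d \<phi>" "t \<notin> {c..d}"
  shows "(deriv ^^ j) \<phi> t = 0"
proof -
  obtain c' d' where "c < c'" "d' < d" and "\<forall>t. t \<notin> {c'..d'} \<longrightarrow> \<phi> t = 0"
    using assms(1) unfolding test_fun_def by blast
  with assms(2) show ?thesis by (intro higher_deriv_eq_0_outside[of c' d']) auto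
qed

lemma continuous_on_higher_deriv:
  "\<forall>n. differentiable_upto n \<phi> \<Longrightarrow> continuous_on S ((deriv ^^ j) \<phi>)"
  by (simp add: continuous_at_imp_continuous_on differentiable_imp_continuous_within
      flip: smooth_iff_differentiable_upto)

lemma continuous_on_test_fun_deriv: "test_fun a b \<phi> \<Longrightarrow> continuous_on S ((deriv ^^ j) \<phi>)"
  by (intro continuous_on_higher_deriv) (auto intro: test_fun_differentiable_upto)

lemma test_fun_mono:
  fixes a b c d :: real
  assumes "test_fun c d \<phi>" "a \<le> c" "d \<le> b"
  shows "test_fun a b \<phi>"
  using assms unfolding test_fun_def by (meson order_le_less_trans order_less_le_trans)

lemma test_fun_compose_affine:
  fixes A D a b :: real
  assumes A: "A > 0" and \<phi>: "test_fun (A * a + D) (A * b + D) \<phi>"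
  shows "test_fun a b (\<lambda>s. \<phi> (A * s + D))"
proof -
  obtain c d where cd: "A * a + D < c" "d < A * b + D" and zero: "\<forall>t. t \<notin> {c..d} \<longrightarrow> \<phi> t = 0"
    using \<phi> unfolding test_fun_def by blast
  have "a < (c - D) / A" "(d - D) / A < b" using cd A by (auto simp: field_simps)
  moreover have "\<forall>s. s \<notin> {(c - D) / A..(d - D) / A} \<longrightarrow> \<phi> (A * s + D) = 0"
    using zero A by (auto simp: field_simps)
  moreover have "\<forall>n. differentiable_upto n (\<lambda>s. \<phi> (A * s + D))"
    using test_fun_differentiable_upto[OF \<phi>] by (auto intro: differentiable_upto_compose_affine)
  ultimately show ?thesis unfolding test_fun_def smooth_iff_differentiable_upto by blast
qed

definition cutoff :: "real \<Rightarrow> real \<Rightarrow> nat \<Rightarrow> real \<Rightarrow> real" where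
  "cutoff y b n t = smooth_step (real (Suc n) * t + (- real (Suc n) * y - 1)) *
                    smooth_step ((- real (Suc n)) * t + (real (Suc n) * b - 1))"

lemma differentiable_upto_cutoff: "differentiable_upto m (cutoff y b n)"
  unfolding cutoff_def
  by (intro differentiable_upto_mult differentiable_upto_compose_affine differentiable_upto_smooth_step)

lemma test_fun_cutoff:
  fixes a b y :: real
  assumes "a \<le> y"
  shows "test_fun a b (cutoff y b n)"
proof -
  let ?c = "y + 1 / real (Suc n)" and ?d = "b - 1 / real (Suc n)"
  have "0 < 1 / real (Suc n)" by simp
  then have "a < ?c" "?d < b" using assms by linarith+
  moreover have "\<forall>t. t \<notin> {?c..?d} \<longrightarrow> cutoff y b n t = 0"
  proof (intro allI impI)
    fix t assume "t \<notin> {?c..?d}"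
    then consider "t < ?c" | "?d < t" by fastforce
    then show "cutoff y b n t = 0"
      by cases (simp_all add: cutoff_def smooth_step_eq_0 field_simps)
  qed
  ultimately show ?thesis
    using differentiable_upto_cutoff unfolding test_fun_def smooth_iff_differentiable_upto by blast
qed

lemma cutoff_nonneg: "0 \<le> cutoff y b n t"
  unfolding cutoff_def by (intro mult_nonneg_nonneg smooth_step_nonneg)

lemma cutoff_le_1: "cutoff y b n t \<le> 1"
  unfolding cutoff_def by (intro mult_le_one smooth_step_le_1 smooth_step_nonneg)

lemma filterlim_Suc_mult_add_at_top:
  assumes "(c::real) > 0"
  shows "filterlim (\<lambda>n. real (Suc n) * c + d) at_top sequentially"
proof -
  have "filterlim (\<lambda>n. c * real n) at_top sequentially"
    by (rule filterlim_tendsto_pos_mult_at_top[OF tendsto_const assms filterlim_real_sequentially])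
  then have "filterlim (\<lambda>n. d + c * real (Suc n)) at_top sequentially"
    by (intro filterlim_tendsto_add_at_top[OF tendsto_const] filterlim_sequentially_Suc[THEN iffD2])
  then show ?thesis by (simp add: algebra_simps)
qed

lemma tendsto_cutoff_indicator: "(\<lambda>n. cutoff y b n t) \<longlonglongrightarrow> indicator {y<..<b} t"
proof (cases "y < t \<and> t < b")
  case True
  have "filterlim (\<lambda>n. real (Suc n) * (t - y) + (- 1)) at_top sequentially"
    "filterlim (\<lambda>n. real (Suc n) * (b - t) + (- 1)) at_top sequentially"
    using True by (intro filterlim_Suc_mult_add_at_top; simp)+
  from tendsto_mult[OF this[THEN filterlim_compose[OF tendsto_smooth_step_at_top]]] True
  show ?thesis by (simp add: cutoff_def algebra_simps)
next
  case False
  have "cutoff y b n t = 0" for n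
  proof -
    from False consider "t \<le> y" | "b \<le> t" by fastforce
    then show ?thesis
    proof cases
      case 1
      then have "real (Suc n) * t \<le> real (Suc n) * y" by (intro mult_left_mono) auto
      then have "real (Suc n) * t + (- real (Suc n) * y - 1) \<le> 0" by linarith
      then show ?thesis by (simp add: cutoff_def smooth_step_eq_0)
    next
      case 2
      then have "real (Suc n) * b \<le> real (Suc n) * t" by (intro mult_left_mono) auto
      then have "(- real (Suc n)) * t + (real (Suc n) * b - 1) \<le> 0" by linarith
      then show ?thesis by (simp add: cutoff_def smooth_step_eq_0)
    qed
  qed
  then show ?thesis using False by (auto simp: indicator_def)
qed

section \<open>The fundamental lemma of the calculus of variations\<close>

lemma borel_measurable_indicator_lebesgue_on:
  "A \<in> sets borel \<Longrightarrow> (indicator A :: real \<Rightarrow> real) \<in> borel_measurable (lebesgue_on S)"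
  by (intro measurable_restrict_space1 measurable_completion) simp

lemma integral_mult_indicator_interval_eq_0:
  fixes a b y :: real and h :: "real \<Rightarrow> real"
  assumes h: "integrable (lebesgue_on {a..b}) h"
    and orth: "\<forall>\<phi>. test_fun a b \<phi> \<longrightarrow> (\<integral>t. h t * \<phi> t \<partial>lebesgue_on {a..b}) = 0"
    and y: "a \<le> y"
  shows "(\<integral>t. h t * indicator {y<..<b} t \<partial>lebesgue_on {a..b}) = 0"
proof -
  have hm: "h \<in> borel_measurable (lebesgue_on {a..b})" using h by (rule borel_measurable_integrable)
  have "(\<lambda>n. \<integral>t. h t * cutoff y b n t \<partial>lebesgue_on {a..b})
      \<longlonglongrightarrow> (\<integral>t. h t * indicator {y<..<b} t \<partial>lebesgue_on {a..b})"
  proof (rule integral_dominated_convergence[where w="\<lambda>t. norm (h t)"])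
    from hm show "(\<lambda>t. h t * indicator {y<..<b} t) \<in> borel_measurable (lebesgue_on {a..b})"
      by (rule borel_measurable_times[OF _ borel_measurable_indicator_lebesgue_on]) simp
    have "cutoff y b n \<in> borel_measurable (lebesgue_on {a..b})" for n
      using continuous_on_higher_deriv[OF allI[OF differentiable_upto_cutoff], of _ 0]
      by (intro continuous_imp_measurable_on_sets_lebesgue) auto
    with hm show "(\<lambda>t. h t * cutoff y b n t) \<in> borel_measurable (lebesgue_on {a..b})" for n
      by (rule borel_measurable_times)
    show "integrable (lebesgue_on {a..b}) (\<lambda>t. norm (h t))" using h by simp
    show "AE t in lebesgue_on {a..b}. (\<lambda>n. h t * cutoff y b n t) \<longlonglongrightarrow> h t * indicator {y<..<b} t"
      by (intro AE_I2 tendsto_mult tendsto_const tendsto_cutoff_indicator)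
    show "AE t in lebesgue_on {a..b}. norm (h t * cutoff y b n t) \<le> norm (h t)" for n
      using cutoff_nonneg[of y b n] cutoff_le_1[of y b n]
      by (intro AE_I2) (simp add: abs_mult mult_left_le)
  qed
  moreover have "(\<integral>t. h t * cutoff y b n t \<partial>lebesgue_on {a..b}) = 0" for n
    using orth test_fun_cutoff[OF y] by blast
  ultimately have "(\<lambda>n. 0) \<longlonglongrightarrow> (\<integral>t. h t * indicator {y<..<b} t \<partial>lebesgue_on {a..b})"
    by simp
  then show ?thesis by (rule LIMSEQ_unique[OF tendsto_const, symmetric])
qed

lemma integral_mult_indicator_greaterThan_eq_0:
  fixes a b :: real and h :: "real \<Rightarrow> real"
  assumes h: "integrable (lebesgue_on {a..b}) h"
    and orth: "\<forall>\<phi>. test_fun a b \<phi> \<longrightarrow> (\<integral>t. h t * \<phi> t \<partial>lebesgue_on {a..b}) = 0"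
  shows "(\<integral>t. h t * indicator {x<..} t \<partial>lebesgue_on {a..b}) = 0"
proof (cases "b \<le> x")
  case True
  then have "(\<integral>t. h t * indicator {x<..} t \<partial>lebesgue_on {a..b}) = (\<integral>t. 0 \<partial>lebesgue_on {a..b})"
    by (intro Bochner_Integration.integral_cong) auto
  then show ?thesis by simp
next
  case False
  define y where "y = max x a"
  have hm: "h \<in> borel_measurable (lebesgue_on {a..b})" using h by (rule borel_measurable_integrable)
  have "AE t in lebesgue. t \<noteq> a" "AE t in lebesgue. t \<noteq> b"
    by (intro AE_completion AE_lborel_singleton)+
  then have "AE t in lebesgue. t \<in> {a..b} \<longrightarrow> h t * indicator {x<..} t = h t * indicator {y<..<b} t"
    by eventually_elim (use False in \<open>auto simp: y_def indicator_def\<close>)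
  then have "(\<integral>t. h t * indicator {x<..} t \<partial>lebesgue_on {a..b})
      = (\<integral>t. h t * indicator {y<..<b} t \<partial>lebesgue_on {a..b})"
    using hm by (intro Bochner_Integration.integral_cong_AE borel_measurable_times
        borel_measurable_indicator_lebesgue_on) (auto simp: AE_restrict_space_iff)
  also have "\<dots> = 0"
    by (rule integral_mult_indicator_interval_eq_0[OF h orth]) (simp add: y_def)
  finally show ?thesis .
qed

lemma ennreal_eq_ennreal_uminus_iff: "ennreal u = ennreal (- u) \<longleftrightarrow> u = 0"
  by (cases "u > 0") (auto simp: ennreal_eq_0_iff ennreal_neg)

text \<open>The measures with densities \<open>max H 0\<close> and \<open>max (-H) 0\<close> agree on all half-lines, hence are equal.\<close>
lemma AE_eq_0_if_integral_greaterThan_eq_0: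
  fixes H :: "real \<Rightarrow> real"
  assumes H: "integrable lborel H"
    and zero: "\<And>x. (\<integral>t. H t * indicator {x<..} t \<partial>lborel) = 0"
  shows "AE t in lborel. H t = 0"
proof -
  define P where "P = (\<lambda>t. ennreal (H t))"
  define Q where "Q = (\<lambda>t. ennreal (- H t))"
  have Hm: "H \<in> borel_measurable lborel" using H by (rule borel_measurable_integrable)
  then have Pm: "P \<in> borel_measurable lborel" "Q \<in> borel_measurable lborel"
    unfolding P_def Q_def by measurable
  have emeasure_eq: "emeasure (density lborel (\<lambda>t. ennreal (G t))) {x<..}
      = ennreal (\<integral>t. max (G t) 0 * indicator {x<..} t \<partial>lborel)"
    if "integrable lborel G" for G :: "real \<Rightarrow> real" and x
  proof -
    have "integrable lborel (\<lambda>t. max (G t) 0 * indicator {x<..} t)"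
      using that by (auto intro!: integrable_mult_indicator[where 'b=real, simplified] simp: mult.commute)
    moreover have "G \<in> borel_measurable lborel" using that by (rule borel_measurable_integrable)
    ultimately show ?thesis
      by (subst emeasure_density, measurable, subst nn_integral_eq_integral[symmetric])
         (auto intro!: nn_integral_cong simp: indicator_def max_def ennreal_neg)
  qed
  have "density lborel P = density lborel Q"
  proof (rule measure_eqI_lessThan)
    show "sets (density lborel P) = sets borel" "sets (density lborel Q) = sets borel" by simp_all
    fix x :: real
    have iP: "integrable lborel (\<lambda>t. max (H t) 0 * indicator {x<..} t)"
      and iQ: "integrable lborel (\<lambda>t. max (- H t) 0 * indicator {x<..} t)"
      using H by (auto intro!: integrable_mult_indicator[where 'b=real, simplified] simp: mult.commute)
    have "(\<integral>t. max (H t) 0 * indicator {x<..} t \<partial>lborel)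
        - (\<integral>t. max (- H t) 0 * indicator {x<..} t \<partial>lborel) = (\<integral>t. H t * indicator {x<..} t \<partial>lborel)"
      by (subst Bochner_Integration.integral_diff[OF iP iQ, symmetric])
         (intro Bochner_Integration.integral_cong, auto simp: max_def indicator_def)
    then show "emeasure (density lborel P) {x<..} = emeasure (density lborel Q) {x<..}"
      using zero[of x] emeasure_eq[OF H, of x] emeasure_eq[of "\<lambda>t. - H t" x] H
      by (simp add: P_def Q_def)
    show "emeasure (density lborel P) {x<..} < \<infinity>"
      using emeasure_eq[OF H] by (simp add: P_def)
  qed
  moreover have "integral\<^sup>N lborel P \<noteq> \<infinity>"
  proof -
    have "integral\<^sup>N lborel P \<le> (\<integral>\<^sup>+t. ennreal (norm (H t)) \<partial>lborel)"
      by (intro nn_integral_mono) (auto simp: P_def)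
    also have "\<dots> < \<infinity>" using H by (simp add: integrable_iff_bounded)
    finally show ?thesis by simp
  qed
  ultimately have "AE t in lborel. P t = Q t"
    using finite_density_unique[OF Pm] by auto
  then show ?thesis by eventually_elim (simp add: P_def Q_def ennreal_eq_ennreal_uminus_iff)
qed

lemma AE_eq_0_if_orthogonal_test_funs:
  fixes a b :: real and h :: "real \<Rightarrow> real"
  assumes h: "integrable (lebesgue_on {a..b}) h"
    and orth: "\<forall>\<phi>. test_fun a b \<phi> \<longrightarrow> (\<integral>t. h t * \<phi> t \<partial>lebesgue_on {a..b}) = 0"
  shows "AE t in lebesgue_on {a..b}. h t = 0"
proof -
  define H where "H t = indicator {a..b} t * h t" for t
  have sab: "{a..b} \<inter> space lebesgue \<in> sets lebesgue" by simp
  have Hi: "integrable lebesgue H"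
    using h unfolding H_def by (subst (asm) integrable_restrict_space[OF sab]) simp
  then obtain H' where H'm: "H' \<in> borel_measurable lborel" and HH': "AE t in lborel. H t = H' t"
    using completion_ex_borel_measurable_real borel_measurable_integrable by blast
  have HH'l: "AE t in lebesgue. H t = H' t" using HH' by (rule AE_completion)
  have "integrable lebesgue H'"
    using H'm by (intro integrable_cong_AE_imp[OF Hi _ HH'l]) (auto intro: measurable_completion)
  then have H'i: "integrable lborel H'" using integrable_completion[OF H'm] by simp
  have "(\<integral>t. H' t * indicator {x<..} t \<partial>lborel) = 0" for x
  proof -
    have m: "(\<lambda>t. H' t * indicator {x<..} t) \<in> borel_measurable lborel" using H'm by measurable
    have "(\<integral>t. H' t * indicator {x<..} t \<partial>lborel) = (\<integral>t. H' t * indicator {x<..} t \<partial>lebesgue)"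
      using m by (simp add: integral_completion)
    also have "\<dots> = (\<integral>t. H t * indicator {x<..} t \<partial>lebesgue)"
    proof (rule integral_cong_AE)
      show "(\<lambda>t. H' t * indicator {x<..} t) \<in> borel_measurable lebesgue"
        using m by (rule measurable_completion)
      have "H \<in> borel_measurable lebesgue" using Hi by (rule borel_measurable_integrable)
      moreover have "(indicator {x<..} :: real \<Rightarrow> real) \<in> borel_measurable lebesgue"
        by (rule measurable_completion) simp
      ultimately show "(\<lambda>t. H t * indicator {x<..} t) \<in> borel_measurable lebesgue"
        by (rule borel_measurable_times)
      show "AE t in lebesgue. H' t * indicator {x<..} t = H t * indicator {x<..} t"
        using HH'l by eventually_elim simp
    qed
    also have "\<dots> = (\<integral>t. h t * indicator {x<..} t \<partial>lebesgue_on {a..b})"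
      by (subst integral_restrict_space[OF sab]) (simp add: H_def mult_ac)
    also have "\<dots> = 0" by (rule integral_mult_indicator_greaterThan_eq_0[OF h orth])
    finally show ?thesis .
  qed
  then have "AE t in lborel. H' t = 0" by (rule AE_eq_0_if_integral_greaterThan_eq_0[OF H'i])
  then have "AE t in lebesgue. H t = 0" using HH' by (auto intro: AE_completion elim: AE_mp)
  then show ?thesis by (subst AE_restrict_space_iff) (auto simp: H_def elim: AE_mp)
qed

section \<open>Minkowski's inequality\<close>

lemma powr_le_self:
  assumes "0 \<le> (z::real)" "z \<le> 1" "1 \<le> P"
  shows "z powr P \<le> z"
proof (cases "z = 0")
  case False
  then have "z powr P \<le> z powr 1" using assms by (intro powr_mono') auto
  then show ?thesis using False assms by simp
qed simp

lemma powr_convex_combination_le: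
  fixes l x y P :: real
  assumes P: "1 \<le> P" and l: "0 \<le> l" "l \<le> 1" and xy: "0 \<le> x" "0 \<le> y"
  shows "(l * x + (1 - l) * y) powr P \<le> l * x powr P + (1 - l) * y powr P"
proof -
  consider "x = 0" | "y = 0" | "x > 0" "y > 0" using xy by linarith
  then show ?thesis
  proof cases
    case 1
    have "((1 - l) * y) powr P = (1 - l) powr P * y powr P"
      using l xy by (simp add: powr_mult)
    also have "\<dots> \<le> (1 - l) * y powr P"
      using l P by (intro mult_right_mono powr_le_self) auto
    finally show ?thesis using 1 P by simp
  next
    case 2
    have "(l * x) powr P = l powr P * x powr P"
      using l xy by (simp add: powr_mult)
    also have "\<dots> \<le> l * x powr P"
      using l P by (intro mult_right_mono powr_le_self) auto
    finally show ?thesis using 2 P by simp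
  next
    case 3
    then show ?thesis using convex_onD[OF powr_convex[OF P], of "1 - l" x y] l by auto
  qed
qed

lemma powr_add_le_weighted:
  fixes P s t A B :: real
  assumes P: "1 \<le> P" and st: "0 \<le> s" "0 \<le> t" and AB: "0 < A" "0 < B"
  shows "(s + t) powr P \<le> (A + B) powr P * (A / (A + B) * (s / A) powr P + B / (A + B) * (t / B) powr P)"
proof -
  define l where "l = A / (A + B)"
  have l: "0 \<le> l" "l \<le> 1" "1 - l = B / (A + B)" using AB by (auto simp: l_def field_simps)
  have "l * (s / A) = s / (A + B)" "(1 - l) * (t / B) = t / (A + B)"
    using AB unfolding l(3) by (simp_all add: l_def field_simps)
  then have "s + t = (A + B) * (l * (s / A) + (1 - l) * (t / B))"
    using AB by (simp add: add_divide_distrib[symmetric])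
  then have "(s + t) powr P = (A + B) powr P * (l * (s / A) + (1 - l) * (t / B)) powr P"
    using AB st l by (simp add: powr_mult)
  also have "\<dots> \<le> (A + B) powr P * (l * (s / A) powr P + (1 - l) * (t / B) powr P)"
    using AB st l P by (intro mult_left_mono powr_convex_combination_le) auto
  finally show ?thesis unfolding l(3) by (simp only: l_def)
qed

lemma integral_powr_abs_add_of_null:
  fixes u v :: "'a \<Rightarrow> real" and P :: real
  assumes um: "u \<in> borel_measurable M" and vm: "v \<in> borel_measurable M"
    and ui: "integrable M (\<lambda>t. \<bar>u t\<bar> powr P)" and vi: "integrable M (\<lambda>t. \<bar>v t\<bar> powr P)"
    and null: "(\<integral>t. \<bar>u t\<bar> powr P \<partial>M) = 0"
  shows "integrable M (\<lambda>t. \<bar>u t + v t\<bar> powr P)"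
    "(\<integral>t. \<bar>u t + v t\<bar> powr P \<partial>M) = (\<integral>t. \<bar>v t\<bar> powr P \<partial>M)"
proof -
  have "AE t in M. \<bar>u t\<bar> powr P = 0"
    using integral_nonneg_eq_0_iff_AE[OF ui] null by auto
  then have ae: "AE t in M. \<bar>u t + v t\<bar> powr P = \<bar>v t\<bar> powr P"
    by eventually_elim simp
  have wm: "(\<lambda>t. \<bar>u t + v t\<bar> powr P) \<in> borel_measurable M" using um vm by measurable
  show "integrable M (\<lambda>t. \<bar>u t + v t\<bar> powr P)"
    by (rule integrable_cong_AE_imp[OF vi wm]) (use ae in \<open>auto elim: AE_mp\<close>)
  show "(\<integral>t. \<bar>u t + v t\<bar> powr P \<partial>M) = (\<integral>t. \<bar>v t\<bar> powr P \<partial>M)"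
    by (rule integral_cong_AE[OF wm]) (use vm ae in auto)
qed

text \<open>With \<open>A\<close>, \<open>B\<close> the \<open>L\<^sup>P\<close> norms of \<open>u\<close>, \<open>v\<close>, convexity of \<open>powr P\<close> bounds \<open>\<bar>u + v\<bar> powr P\<close>
  pointwise by a function whose integral is exactly \<open>(A + B) powr P\<close>.\<close>
lemma minkowski_integral:
  fixes u v :: "'a \<Rightarrow> real" and P :: real
  assumes P: "1 \<le> P" and um: "u \<in> borel_measurable M" and vm: "v \<in> borel_measurable M"
    and ui: "integrable M (\<lambda>t. \<bar>u t\<bar> powr P)" and vi: "integrable M (\<lambda>t. \<bar>v t\<bar> powr P)"
  shows "integrable M (\<lambda>t. \<bar>u t + v t\<bar> powr P) \<and>
    (\<integral>t. \<bar>u t + v t\<bar> powr P \<partial>M) powr (1/P)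
      \<le> (\<integral>t. \<bar>u t\<bar> powr P \<partial>M) powr (1/P) + (\<integral>t. \<bar>v t\<bar> powr P \<partial>M) powr (1/P)"
proof -
  define IU where "IU = (\<integral>t. \<bar>u t\<bar> powr P \<partial>M)"
  define IV where "IV = (\<integral>t. \<bar>v t\<bar> powr P \<partial>M)"
  define A where "A = IU powr (1/P)"
  define B where "B = IV powr (1/P)"
  have IU0: "0 \<le> IU" and IV0: "0 \<le> IV" unfolding IU_def IV_def by (auto intro: integral_nonneg_AE)
  consider "IU = 0" | "IV = 0" | "IU \<noteq> 0" "IV \<noteq> 0" by blast
  then show ?thesis
  proof cases
    case 1
    then show ?thesis
      using integral_powr_abs_add_of_null[OF um vm ui vi] by (simp add: IU_def)
  next
    case 2
    then show ?thesis
      using integral_powr_abs_add_of_null[OF vm um vi ui] by (simp add: IV_def add.commute)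
  next
    case 3
    then have Apos: "0 < A" "0 < B" using IU0 IV0 by (auto simp: A_def B_def)
    have AP: "A powr P = IU" "B powr P = IV" using IU0 IV0 P by (auto simp: A_def B_def powr_powr)
    define R where "R t = (A + B) powr P * (A / (A + B) * (\<bar>u t\<bar> powr P / IU)
        + B / (A + B) * (\<bar>v t\<bar> powr P / IV))" for t
    have bound: "\<bar>u t + v t\<bar> powr P \<le> R t" for t
    proof -
      have "\<bar>u t + v t\<bar> powr P \<le> (\<bar>u t\<bar> + \<bar>v t\<bar>) powr P"
        using P by (intro powr_mono2) auto
      also have "\<dots> \<le> (A + B) powr P * (A / (A + B) * (\<bar>u t\<bar> / A) powr P + B / (A + B) * (\<bar>v t\<bar> / B) powr P)"
        by (rule powr_add_le_weighted[OF P _ _ Apos]) auto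
      also have "\<dots> = R t" using Apos by (simp add: R_def powr_divide AP)
      finally show ?thesis .
    qed
    have Ri: "integrable M R" unfolding R_def using ui vi by simp
    have wm: "(\<lambda>t. \<bar>u t + v t\<bar> powr P) \<in> borel_measurable M" using um vm by measurable
    have "norm (\<bar>u t + v t\<bar> powr P) \<le> norm (R t)" for t
      using bound[of t] by (smt (verit) powr_ge_zero real_norm_def)
    then have wi: "integrable M (\<lambda>t. \<bar>u t + v t\<bar> powr P)"
      by (intro Bochner_Integration.integrable_bound[OF Ri wm] AE_I2)
    have "(\<integral>t. \<bar>u t + v t\<bar> powr P \<partial>M) \<le> (\<integral>t. R t \<partial>M)"
      by (intro Bochner_Integration.integral_mono wi Ri bound)
    also have "(\<integral>t. R t \<partial>M) = (A + B) powr P * (A / (A + B) + B / (A + B))"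
      unfolding R_def using ui vi 3 by (simp add: IU_def IV_def)
    also have "\<dots> = (A + B) powr P" using Apos by (simp add: add_divide_distrib[symmetric])
    finally have "(\<integral>t. \<bar>u t + v t\<bar> powr P \<partial>M) powr (1/P) \<le> ((A + B) powr P) powr (1/P)"
      using P by (intro powr_mono2) (auto intro: integral_nonneg_AE)
    also have "\<dots> = A + B" using Apos P by (simp add: powr_powr)
    finally show ?thesis using wi by (simp add: A_def B_def IU_def IV_def)
  qed
qed

lemma minkowski_sum:
  fixes a b :: "'a \<Rightarrow> real" and P :: real
  assumes J: "finite J" and P: "1 \<le> P" and ab: "\<And>j. 0 \<le> a j" "\<And>j. 0 \<le> b j"
  shows "(\<Sum>j\<in>J. (a j + b j) powr P) powr (1/P)
      \<le> (\<Sum>j\<in>J. a j powr P) powr (1/P) + (\<Sum>j\<in>J. b j powr P) powr (1/P)"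
proof -
  have m: "f \<in> borel_measurable (count_space J)" for f :: "'a \<Rightarrow> real" by simp
  have i: "integrable (count_space J) f" for f :: "'a \<Rightarrow> real"
    using J by (simp add: integrable_count_space)
  from minkowski_integral[OF P m m i i, of a b] show ?thesis
    using J ab by (simp add: lebesgue_integral_count_space_finite)
qed

lemma enn2real_ge_1: "1 \<le> p \<Longrightarrow> p \<noteq> \<infinity> \<Longrightarrow> 1 \<le> enn2real p"
  by (metis enn2real_1 enn2real_mono infinity_ennreal_def top.not_eq_extremum)

lemma in_Lp_finite_iff:
  fixes a b :: real
  assumes "p \<noteq> \<infinity>"
  shows "in_Lp {a..b} p h \<longleftrightarrow> h \<in> borel_measurable (lebesgue_on {a..b}) \<and>
            integrable (lebesgue_on {a..b}) (\<lambda>t. \<bar>h t\<bar> powr enn2real p)"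
proof
  assume h: "in_Lp {a..b} p h"
  then have m: "h \<in> borel_measurable (lebesgue_on {a..b})" by (simp add: in_Lp_def)
  then have m2: "(\<lambda>t. \<bar>h t\<bar> powr enn2real p) \<in> borel_measurable (lebesgue_on {a..b})" by measurable
  have "(\<integral>\<^sup>+ t. ennreal (\<bar>h t\<bar> powr enn2real p) \<partial>lebesgue_on {a..b}) < \<infinity>"
    using h assms by (simp add: in_Lp_def)
  then show "h \<in> borel_measurable (lebesgue_on {a..b}) \<and>
            integrable (lebesgue_on {a..b}) (\<lambda>t. \<bar>h t\<bar> powr enn2real p)"
    using m m2 by (simp add: integrable_iff_bounded)
next
  assume h: "h \<in> borel_measurable (lebesgue_on {a..b}) \<and>
            integrable (lebesgue_on {a..b}) (\<lambda>t. \<bar>h t\<bar> powr enn2real p)"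
  then show "in_Lp {a..b} p h" using assms
    by (simp add: in_Lp_def integrable_iff_bounded)
qed

lemma Lp_norm_finite:
  fixes a b :: real
  assumes "p \<noteq> \<infinity>" "in_Lp {a..b} p h"
  shows "Lp_norm {a..b} p h = (\<integral>t. \<bar>h t\<bar> powr enn2real p \<partial>lebesgue_on {a..b}) powr (1 / enn2real p)"
proof -
  have i: "integrable (lebesgue_on {a..b}) (\<lambda>t. \<bar>h t\<bar> powr enn2real p)"
    using assms in_Lp_finite_iff by blast
  have "(\<integral>\<^sup>+ t. ennreal (\<bar>h t\<bar> powr enn2real p) \<partial>lebesgue_on {a..b})
      = ennreal (\<integral>t. \<bar>h t\<bar> powr enn2real p \<partial>lebesgue_on {a..b})"
    by (rule nn_integral_eq_integral[OF i]) simp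
  then show ?thesis using assms by (simp add: Lp_norm_def integral_nonneg_AE)
qed

lemma in_Lp_measurable: "in_Lp I p h \<Longrightarrow> h \<in> borel_measurable (lebesgue_on I)"
  by (simp add: in_Lp_def)

lemma esssup_abs_nonneg:
  fixes a b :: real
  assumes "a < b"
  shows "0 \<le> esssup (lebesgue_on {a..b}) (\<lambda>t. ereal \<bar>h t\<bar>)"
proof -
  have "emeasure (lebesgue_on {a..b}) (space (lebesgue_on {a..b})) \<noteq> 0"
    using assms by (simp add: emeasure_restrict_space)
  then have "esssup (lebesgue_on {a..b}) (\<lambda>t. 0::ereal) = 0" by (rule esssup_const)
  moreover have "esssup (lebesgue_on {a..b}) (\<lambda>t. 0::ereal) \<le> esssup (lebesgue_on {a..b}) (\<lambda>t. ereal \<bar>h t\<bar>)"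
    by (rule esssup_mono) auto
  ultimately show ?thesis by simp
qed

lemma Lp_norm_nonneg:
  fixes a b :: real
  assumes "a < b"
  shows "0 \<le> Lp_norm {a..b} p h"
  using esssup_abs_nonneg[OF assms, of h] by (simp add: Lp_norm_def real_of_ereal_pos)

lemma Lp_norm_cong:
  fixes a b :: real
  assumes ae: "AE t in lebesgue_on {a..b}. h t = h' t"
    and m: "h \<in> borel_measurable (lebesgue_on {a..b})" "h' \<in> borel_measurable (lebesgue_on {a..b})"
  shows "Lp_norm {a..b} p h = Lp_norm {a..b} p h'"
proof -
  have "(\<integral>\<^sup>+ t. ennreal (\<bar>h t\<bar> powr enn2real p) \<partial>lebesgue_on {a..b})
      = (\<integral>\<^sup>+ t. ennreal (\<bar>h' t\<bar> powr enn2real p) \<partial>lebesgue_on {a..b})"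
    by (rule nn_integral_cong_AE) (use ae in \<open>eventually_elim, simp\<close>)
  moreover have "esssup (lebesgue_on {a..b}) (\<lambda>t. ereal \<bar>h t\<bar>) = esssup (lebesgue_on {a..b}) (\<lambda>t. ereal \<bar>h' t\<bar>)"
    by (rule esssup_AE_cong) (use m ae in \<open>auto elim: AE_mp\<close>)
  ultimately show ?thesis unfolding Lp_norm_def by simp
qed

lemma Lp_norm_triangle:
  fixes a b :: real
  assumes ab: "a < b" and p: "1 \<le> p" and u: "in_Lp {a..b} p u" and v: "in_Lp {a..b} p v"
  shows "in_Lp {a..b} p (\<lambda>t. u t + v t) \<and>
         Lp_norm {a..b} p (\<lambda>t. u t + v t) \<le> Lp_norm {a..b} p u + Lp_norm {a..b} p v"
proof (cases "p = \<infinity>")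
  case False
  have P: "1 \<le> enn2real p" using enn2real_ge_1[OF p False] .
  have um: "u \<in> borel_measurable (lebesgue_on {a..b})" and ui: "integrable (lebesgue_on {a..b}) (\<lambda>t. \<bar>u t\<bar> powr enn2real p)"
    using u in_Lp_finite_iff[OF False] by auto
  have vm: "v \<in> borel_measurable (lebesgue_on {a..b})" and vi: "integrable (lebesgue_on {a..b}) (\<lambda>t. \<bar>v t\<bar> powr enn2real p)"
    using v in_Lp_finite_iff[OF False] by auto
  note mk = minkowski_integral[OF P um vm ui vi]
  have wm: "(\<lambda>t. u t + v t) \<in> borel_measurable (lebesgue_on {a..b})" using um vm by measurable
  have w: "in_Lp {a..b} p (\<lambda>t. u t + v t)" using mk wm in_Lp_finite_iff[OF False] by auto
  show ?thesis using w mk by (simp add: Lp_norm_finite[OF False] u v)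
next
  case True
  let ?M = "lebesgue_on {a..b}"
  have um: "u \<in> borel_measurable ?M" and vm: "v \<in> borel_measurable ?M"
    using u v by (auto simp: in_Lp_def)
  have uf: "esssup ?M (\<lambda>t. ereal \<bar>u t\<bar>) < \<infinity>" and vf: "esssup ?M (\<lambda>t. ereal \<bar>v t\<bar>) < \<infinity>"
    using u v True by (auto simp: in_Lp_def)
  have "esssup ?M (\<lambda>t. ereal \<bar>u t + v t\<bar>) \<le> esssup ?M (\<lambda>t. ereal \<bar>u t\<bar> + ereal \<bar>v t\<bar>)"
    by (rule esssup_mono) (use um vm in \<open>auto\<close>)
  also have "\<dots> \<le> esssup ?M (\<lambda>t. ereal \<bar>u t\<bar>) + esssup ?M (\<lambda>t. ereal \<bar>v t\<bar>)"
    by (rule esssup_add)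
  finally have le: "esssup ?M (\<lambda>t. ereal \<bar>u t + v t\<bar>) \<le> esssup ?M (\<lambda>t. ereal \<bar>u t\<bar>) + esssup ?M (\<lambda>t. ereal \<bar>v t\<bar>)" .
  have sf: "esssup ?M (\<lambda>t. ereal \<bar>u t\<bar>) + esssup ?M (\<lambda>t. ereal \<bar>v t\<bar>) < \<infinity>"
    using uf vf esssup_abs_nonneg[OF ab, of u] esssup_abs_nonneg[OF ab, of v] by (simp add: ereal_add_strict_mono2)
  have w: "in_Lp {a..b} p (\<lambda>t. u t + v t)" using le sf um vm True by (auto simp: in_Lp_def)
  have "real_of_ereal (esssup ?M (\<lambda>t. ereal \<bar>u t + v t\<bar>))
     \<le> real_of_ereal (esssup ?M (\<lambda>t. ereal \<bar>u t\<bar>) + esssup ?M (\<lambda>t. ereal \<bar>v t\<bar>))"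
    by (rule real_of_ereal_positive_mono[OF esssup_abs_nonneg[OF ab] le sf[THEN less_imp_neq]])
  also have "\<dots> = real_of_ereal (esssup ?M (\<lambda>t. ereal \<bar>u t\<bar>)) + real_of_ereal (esssup ?M (\<lambda>t. ereal \<bar>v t\<bar>))"
    using uf vf esssup_abs_nonneg[OF ab, of u] esssup_abs_nonneg[OF ab, of v]
    by (intro real_of_ereal_add[THEN trans]) auto
  finally show ?thesis using w True by (simp add: Lp_norm_def)
qed

lemma Lp_norm_cmult:
  fixes a b :: real
  assumes ab: "a < b" and p: "1 \<le> p" and h: "in_Lp {a..b} p h"
  shows "in_Lp {a..b} p (\<lambda>t. c * h t) \<and> Lp_norm {a..b} p (\<lambda>t. c * h t) = \<bar>c\<bar> * Lp_norm {a..b} p h"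
proof (cases "p = \<infinity>")
  case False
  let ?P = "enn2real p"
  have P: "1 \<le> ?P" using enn2real_ge_1[OF p False] .
  have hm: "h \<in> borel_measurable (lebesgue_on {a..b})" and hi: "integrable (lebesgue_on {a..b}) (\<lambda>t. \<bar>h t\<bar> powr ?P)"
    using h in_Lp_finite_iff[OF False] by auto
  have eq: "\<bar>c * h t\<bar> powr ?P = \<bar>c\<bar> powr ?P * \<bar>h t\<bar> powr ?P" for t
    by (simp add: abs_mult powr_mult)
  have ci: "integrable (lebesgue_on {a..b}) (\<lambda>t. \<bar>c * h t\<bar> powr ?P)"
    unfolding eq using hi by simp
  have cm: "(\<lambda>t. c * h t) \<in> borel_measurable (lebesgue_on {a..b})" using hm by measurable
  have w: "in_Lp {a..b} p (\<lambda>t. c * h t)" using ci cm in_Lp_finite_iff[OF False] by auto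
  have I0: "0 \<le> (\<integral>t. \<bar>h t\<bar> powr ?P \<partial>lebesgue_on {a..b})" by (intro integral_nonneg_AE) auto
  have "Lp_norm {a..b} p (\<lambda>t. c * h t) = (\<bar>c\<bar> powr ?P * (\<integral>t. \<bar>h t\<bar> powr ?P \<partial>lebesgue_on {a..b})) powr (1 / ?P)"
    by (simp add: Lp_norm_finite[OF False w] eq)
  also have "\<dots> = \<bar>c\<bar> * (\<integral>t. \<bar>h t\<bar> powr ?P \<partial>lebesgue_on {a..b}) powr (1 / ?P)"
    using P I0 by (simp add: powr_mult powr_powr)
  finally show ?thesis using w by (simp add: Lp_norm_finite[OF False h])
next
  case True
  let ?M = "lebesgue_on {a..b}"
  have hm: "h \<in> borel_measurable ?M" and hf: "esssup ?M (\<lambda>t. ereal \<bar>h t\<bar>) < \<infinity>"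
    using h True by (auto simp: in_Lp_def)
  have cm: "(\<lambda>t. c * h t) \<in> borel_measurable ?M" using hm by measurable
  show ?thesis
  proof (cases "c = 0")
    case True
    have "emeasure ?M (space ?M) \<noteq> 0" using ab by (simp add: emeasure_restrict_space)
    then have "esssup ?M (\<lambda>t. ereal 0) = 0" using esssup_const[of ?M "ereal 0"] by simp
    then show ?thesis using True \<open>p = \<infinity>\<close> cm by (simp add: in_Lp_def Lp_norm_def)
  next
    case False
    have "esssup ?M (\<lambda>t. ereal \<bar>c * h t\<bar>) = esssup ?M (\<lambda>t. ereal \<bar>c\<bar> * ereal \<bar>h t\<bar>)"
      by (simp add: abs_mult)
    also have "\<dots> = ereal \<bar>c\<bar> * esssup ?M (\<lambda>t. ereal \<bar>h t\<bar>)"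
      using False by (intro esssup_cmult) simp
    finally have e: "esssup ?M (\<lambda>t. ereal \<bar>c * h t\<bar>) = ereal \<bar>c\<bar> * esssup ?M (\<lambda>t. ereal \<bar>h t\<bar>)" .
    have fin: "ereal \<bar>c\<bar> * esssup ?M (\<lambda>t. ereal \<bar>h t\<bar>) < \<infinity>"
      using hf esssup_abs_nonneg[OF ab, of h] by (cases "esssup ?M (\<lambda>t. ereal \<bar>h t\<bar>)") auto
    show ?thesis using e fin cm \<open>p = \<infinity>\<close> by (simp add: in_Lp_def Lp_norm_def real_of_ereal_mult)
  qed
qed

section \<open>Weak derivatives and the Sobolev norm\<close>

lemma integrable_mult_continuous_on:
  fixes a b :: real and g \<psi> :: "real \<Rightarrow> real"
  assumes g: "integrable (lebesgue_on {a..b}) g" and c: "continuous_on {a..b} \<psi>"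
  shows "integrable (lebesgue_on {a..b}) (\<lambda>t. g t * \<psi> t)"
proof -
  have "compact (\<psi> ` {a..b})" by (rule compact_continuous_image[OF c]) simp
  then have "bounded (\<psi> ` {a..b})" by (rule compact_imp_bounded)
  then obtain B where B0: "\<forall>x\<in>\<psi> ` {a..b}. norm x \<le> B" unfolding bounded_iff by blast
  have B: "norm (\<psi> t) \<le> B" if "t \<in> {a..b}" for t using B0 that by blast
  have m: "\<psi> \<in> borel_measurable (lebesgue_on {a..b})"
    by (rule continuous_imp_measurable_on_sets_lebesgue[OF c]) auto
  have gm: "g \<in> borel_measurable (lebesgue_on {a..b})" using g by (rule borel_measurable_integrable)
  show ?thesis
  proof (rule Bochner_Integration.integrable_bound[where f="\<lambda>t. B * g t"])
    show "integrable (lebesgue_on {a..b}) (\<lambda>t. B * g t)" using g by simp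
    show "(\<lambda>t. g t * \<psi> t) \<in> borel_measurable (lebesgue_on {a..b})"
      using m gm by (intro borel_measurable_times)
    show "AE t in lebesgue_on {a..b}. norm (g t * \<psi> t) \<le> norm (B * g t)"
    proof (rule AE_I2)
      fix t assume "t \<in> space (lebesgue_on {a..b})"
      then have "t \<in> {a..b}" by simp
      then have "\<bar>\<psi> t\<bar> \<le> \<bar>B\<bar>" using B by fastforce
      then show "norm (g t * \<psi> t) \<le> norm (B * g t)"
        by (simp add: abs_mult mult.commute mult_right_mono)
    qed
  qed
qed

lemma integrable_mult_test_fun_deriv:
  fixes a b :: real
  assumes "integrable (lebesgue_on {a..b}) g" "test_fun a b \<phi>"
  shows "integrable (lebesgue_on {a..b}) (\<lambda>t. g t * (deriv ^^ j) \<phi> t)"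
  by (rule integrable_mult_continuous_on[OF assms(1) continuous_on_test_fun_deriv[OF assms(2)]])

lemma weak_deriv_unique:
  fixes a b :: real
  assumes ab: "a < b" and h1: "weak_deriv a b j g h1" and h2: "weak_deriv a b j g h2"
  shows "AE t in lebesgue_on {a..b}. h1 t = h2 t"
proof -
  have i1: "integrable (lebesgue_on {a..b}) h1" and i2: "integrable (lebesgue_on {a..b}) h2"
    using h1 h2 by (auto simp: weak_deriv_def)
  have "AE t in lebesgue_on {a..b}. h1 t - h2 t = 0"
  proof (rule AE_eq_0_if_orthogonal_test_funs)
    show "integrable (lebesgue_on {a..b}) (\<lambda>t. h1 t - h2 t)" using i1 i2 by simp
    show "\<forall>\<phi>. test_fun a b \<phi> \<longrightarrow> (\<integral>t. (h1 t - h2 t) * \<phi> t \<partial>lebesgue_on {a..b}) = 0"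
    proof (intro allI impI)
      fix \<phi> assume \<phi>: "test_fun a b \<phi>"
      have j1: "integrable (lebesgue_on {a..b}) (\<lambda>t. h1 t * \<phi> t)"
        using integrable_mult_test_fun_deriv[OF i1 \<phi>, of 0] by simp
      have j2: "integrable (lebesgue_on {a..b}) (\<lambda>t. h2 t * \<phi> t)"
        using integrable_mult_test_fun_deriv[OF i2 \<phi>, of 0] by simp
      have "(-1::real) ^ j * (\<integral>t. h1 t * \<phi> t \<partial>lebesgue_on {a..b}) = (-1) ^ j * (\<integral>t. h2 t * \<phi> t \<partial>lebesgue_on {a..b})"
        using h1 h2 \<phi> by (auto simp: weak_deriv_def)
      then have "(\<integral>t. h1 t * \<phi> t \<partial>lebesgue_on {a..b}) = (\<integral>t. h2 t * \<phi> t \<partial>lebesgue_on {a..b})"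
        by simp
      then show "(\<integral>t. (h1 t - h2 t) * \<phi> t \<partial>lebesgue_on {a..b}) = 0"
        using j1 j2 by (simp add: left_diff_distrib)
    qed
  qed
  then show ?thesis by eventually_elim simp
qed

lemma weak_deriv_lincomb:
  fixes a b :: real
  assumes u: "weak_deriv a b j u hu" and v: "weak_deriv a b j v hv"
  shows "weak_deriv a b j (\<lambda>t. c * u t + d * v t) (\<lambda>t. c * hu t + d * hv t)"
  unfolding weak_deriv_def
proof (intro conjI allI impI)
  have iu: "integrable (lebesgue_on {a..b}) u" "integrable (lebesgue_on {a..b}) hu"
    and iv: "integrable (lebesgue_on {a..b}) v" "integrable (lebesgue_on {a..b}) hv"
    using u v by (auto simp: weak_deriv_def)
  show "integrable (lebesgue_on {a..b}) (\<lambda>t. c * u t + d * v t)" using iu iv by simp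
  show "integrable (lebesgue_on {a..b}) (\<lambda>t. c * hu t + d * hv t)" using iu iv by simp
  fix \<phi> assume \<phi>: "test_fun a b \<phi>"
  have k1: "integrable (lebesgue_on {a..b}) (\<lambda>t. u t * (deriv ^^ j) \<phi> t)"
    "integrable (lebesgue_on {a..b}) (\<lambda>t. v t * (deriv ^^ j) \<phi> t)"
    using integrable_mult_test_fun_deriv[OF iu(1) \<phi>] integrable_mult_test_fun_deriv[OF iv(1) \<phi>] by auto
  have k2: "integrable (lebesgue_on {a..b}) (\<lambda>t. hu t * \<phi> t)"
    "integrable (lebesgue_on {a..b}) (\<lambda>t. hv t * \<phi> t)"
    using integrable_mult_test_fun_deriv[OF iu(2) \<phi>, of 0] integrable_mult_test_fun_deriv[OF iv(2) \<phi>, of 0] by auto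
  have e1: "(\<integral>t. u t * (deriv ^^ j) \<phi> t \<partial>lebesgue_on {a..b}) = (-1) ^ j * (\<integral>t. hu t * \<phi> t \<partial>lebesgue_on {a..b})"
    and e2: "(\<integral>t. v t * (deriv ^^ j) \<phi> t \<partial>lebesgue_on {a..b}) = (-1) ^ j * (\<integral>t. hv t * \<phi> t \<partial>lebesgue_on {a..b})"
    using u v \<phi> by (auto simp: weak_deriv_def)
  have "(\<integral>t. (c * u t + d * v t) * (deriv ^^ j) \<phi> t \<partial>lebesgue_on {a..b})
      = c * (\<integral>t. u t * (deriv ^^ j) \<phi> t \<partial>lebesgue_on {a..b}) + d * (\<integral>t. v t * (deriv ^^ j) \<phi> t \<partial>lebesgue_on {a..b})"
    using k1 by (simp add: distrib_right mult.assoc)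
  also have "\<dots> = (-1) ^ j * (c * (\<integral>t. hu t * \<phi> t \<partial>lebesgue_on {a..b}) + d * (\<integral>t. hv t * \<phi> t \<partial>lebesgue_on {a..b}))"
    by (simp add: e1 e2 algebra_simps)
  also have "\<dots> = (-1) ^ j * (\<integral>t. (c * hu t + d * hv t) * \<phi> t \<partial>lebesgue_on {a..b})"
    using k2 by (simp add: distrib_right mult.assoc)
  finally show "(\<integral>t. (c * u t + d * v t) * (deriv ^^ j) \<phi> t \<partial>lebesgue_on {a..b})
      = (-1) ^ j * (\<integral>t. (c * hu t + d * hv t) * \<phi> t \<partial>lebesgue_on {a..b})" .
qed

lemma weak_deriv_cong:
  fixes a b :: real
  assumes g: "integrable (lebesgue_on {a..b}) g" and g': "integrable (lebesgue_on {a..b}) g'"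
    and ae: "AE t in lebesgue_on {a..b}. g t = g' t"
  shows "weak_deriv a b j g = weak_deriv a b j g'"
proof (rule ext)
  fix h
  have "(\<integral>t. g t * (deriv ^^ j) \<phi> t \<partial>lebesgue_on {a..b}) = (\<integral>t. g' t * (deriv ^^ j) \<phi> t \<partial>lebesgue_on {a..b})"
    if "test_fun a b \<phi>" for \<phi>
    by (rule integral_cong_AE)
       (use integrable_mult_test_fun_deriv[OF g that] integrable_mult_test_fun_deriv[OF g' that] ae in \<open>auto intro: borel_measurable_integrable elim: AE_mp\<close>)
  then show "weak_deriv a b j g h = weak_deriv a b j g' h"
    using g g' unfolding weak_deriv_def by auto
qed

lemma wD_weak_deriv:
  assumes "sobolev a b k p f" "j \<le> k"
  shows "weak_deriv a b j f (wD a b p j f) \<and> in_Lp {a..b} p (wD a b p j f)"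
  using assms unfolding sobolev_def wD_def by (metis (mono_tags, lifting) someI_ex)

lemma sobolev_integrable: "sobolev a b k p f \<Longrightarrow> integrable (lebesgue_on {a..b}) f"
  unfolding sobolev_def weak_deriv_def by blast

lemma sobolev_lincomb:
  fixes a b :: real
  assumes ab: "a < b" and p: "1 \<le> p" and u: "sobolev a b k p u" and v: "sobolev a b k p v"
  shows "sobolev a b k p (\<lambda>t. c * u t + d * v t)"
    "\<And>j. j \<le> k \<Longrightarrow> AE t in lebesgue_on {a..b}.
        wD a b p j (\<lambda>t. c * u t + d * v t) t = c * wD a b p j u t + d * wD a b p j v t"
proof -
  have L: "weak_deriv a b j (\<lambda>t. c * u t + d * v t) (\<lambda>t. c * wD a b p j u t + d * wD a b p j v t) \<and>
           in_Lp {a..b} p (\<lambda>t. c * wD a b p j u t + d * wD a b p j v t)" if j: "j \<le> k" for j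
  proof
    show "weak_deriv a b j (\<lambda>t. c * u t + d * v t) (\<lambda>t. c * wD a b p j u t + d * wD a b p j v t)"
      by (rule weak_deriv_lincomb) (use wD_weak_deriv[OF u j] wD_weak_deriv[OF v j] in auto)
    have "in_Lp {a..b} p (\<lambda>t. c * wD a b p j u t)" "in_Lp {a..b} p (\<lambda>t. d * wD a b p j v t)"
      using Lp_norm_cmult[OF ab p] wD_weak_deriv[OF u j] wD_weak_deriv[OF v j] by auto
    then show "in_Lp {a..b} p (\<lambda>t. c * wD a b p j u t + d * wD a b p j v t)"
      using Lp_norm_triangle[OF ab p] by blast
  qed
  then show S: "sobolev a b k p (\<lambda>t. c * u t + d * v t)" unfolding sobolev_def by blast
  fix j assume j: "j \<le> k"
  show "AE t in lebesgue_on {a..b}.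
        wD a b p j (\<lambda>t. c * u t + d * v t) t = c * wD a b p j u t + d * wD a b p j v t"
    by (rule weak_deriv_unique[OF ab]) (use wD_weak_deriv[OF S j] L[OF j] in auto)
qed

lemma sob_norm_cong:
  fixes a b :: real
  assumes "integrable (lebesgue_on {a..b}) g" "integrable (lebesgue_on {a..b}) g'"
    and "AE t in lebesgue_on {a..b}. g t = g' t"
  shows "sob_norm a b k p g = sob_norm a b k p g'"
  using weak_deriv_cong[OF assms] unfolding sob_norm_def wD_def by simp

lemma sob_norm_nonneg:
  fixes a b :: real
  assumes "a < b"
  shows "0 \<le> sob_norm a b k p g"
  unfolding sob_norm_def using Lp_norm_nonneg[OF assms] by (auto intro: sum_nonneg)

lemma Lp_norm_wD_cong:
  fixes a b :: real
  assumes "sobolev a b k p g" "j \<le> k" "in_Lp {a..b} p h"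
    and "AE t in lebesgue_on {a..b}. wD a b p j g t = h t"
  shows "Lp_norm {a..b} p (wD a b p j g) = Lp_norm {a..b} p h"
  using Lp_norm_cong[OF assms(4) in_Lp_measurable in_Lp_measurable] wD_weak_deriv[OF assms(1,2)] assms(3)
  by blast

lemma sobolev_add:
  fixes a b :: real
  assumes ab: "a < b" and p: "1 \<le> p" and u: "sobolev a b k p u" and v: "sobolev a b k p v"
  shows "sobolev a b k p (\<lambda>t. u t + v t)"
    "\<And>j. j \<le> k \<Longrightarrow> AE t in lebesgue_on {a..b}.
        wD a b p j (\<lambda>t. u t + v t) t = wD a b p j u t + wD a b p j v t"
  using sobolev_lincomb[OF ab p u v, where c=1 and d=1] by auto

lemma sobolev_scale:
  fixes a b :: real
  assumes ab: "a < b" and p: "1 \<le> p" and u: "sobolev a b k p u"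
  shows "sobolev a b k p (\<lambda>t. c * u t)"
    "\<And>j. j \<le> k \<Longrightarrow> AE t in lebesgue_on {a..b}.
        wD a b p j (\<lambda>t. c * u t) t = c * wD a b p j u t"
  using sobolev_lincomb[OF ab p u u, where c=c and d=0] by auto

lemma sobolev_diff:
  fixes a b :: real
  assumes ab: "a < b" and p: "1 \<le> p" and u: "sobolev a b k p u" and v: "sobolev a b k p v"
  shows "sobolev a b k p (\<lambda>t. u t - v t)"
  using sobolev_lincomb(1)[OF ab p u v, where c=1 and d="-1"] by simp

lemma sob_norm_triangle:
  fixes a b :: real
  assumes ab: "a < b" and p: "1 \<le> p" and u: "sobolev a b k p u" and v: "sobolev a b k p v"
  shows "sob_norm a b k p (\<lambda>t. u t + v t) \<le> sob_norm a b k p u + sob_norm a b k p v"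
proof -
  let ?n = "\<lambda>g j. Lp_norm {a..b} p (wD a b p j g)"
  have tri: "?n (\<lambda>t. u t + v t) j \<le> ?n u j + ?n v j" if j: "j \<le> k" for j
  proof -
    have "?n (\<lambda>t. u t + v t) j = Lp_norm {a..b} p (\<lambda>t. wD a b p j u t + wD a b p j v t)"
      by (rule Lp_norm_wD_cong[OF sobolev_add(1)[OF ab p u v] j])
         (use Lp_norm_triangle[OF ab p] wD_weak_deriv[OF u j] wD_weak_deriv[OF v j] sobolev_add(2)[OF ab p u v j] in auto)
    also have "\<dots> \<le> ?n u j + ?n v j"
      using Lp_norm_triangle[OF ab p] wD_weak_deriv[OF u j] wD_weak_deriv[OF v j] by blast
    finally show ?thesis .
  qed
  show ?thesis
  proof (cases "p = \<infinity>")
    case True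
    have "(\<Sum>j\<le>k. ?n (\<lambda>t. u t + v t) j) \<le> (\<Sum>j\<le>k. ?n u j + ?n v j)"
      by (rule sum_mono) (use tri in simp)
    then show ?thesis unfolding sob_norm_def using True by (simp add: sum.distrib)
  next
    case False
    let ?P = "enn2real p"
    have P: "1 \<le> ?P" using enn2real_ge_1[OF p False] .
    have "(\<Sum>j\<le>k. ?n (\<lambda>t. u t + v t) j powr ?P) powr (1 / ?P) \<le> (\<Sum>j\<le>k. (?n u j + ?n v j) powr ?P) powr (1 / ?P)"
      using P tri Lp_norm_nonneg[OF ab]
      by (intro powr_mono2 sum_mono sum_nonneg) auto
    also have "\<dots> \<le> (\<Sum>j\<le>k. ?n u j powr ?P) powr (1 / ?P) + (\<Sum>j\<le>k. ?n v j powr ?P) powr (1 / ?P)"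
      by (rule minkowski_sum) (use P Lp_norm_nonneg[OF ab] in auto)
    finally show ?thesis unfolding sob_norm_def using False by simp
  qed
qed

lemma sob_norm_cmult:
  fixes a b :: real
  assumes ab: "a < b" and p: "1 \<le> p" and u: "sobolev a b k p u"
  shows "sob_norm a b k p (\<lambda>t. c * u t) = \<bar>c\<bar> * sob_norm a b k p u"
proof -
  let ?n = "\<lambda>g j. Lp_norm {a..b} p (wD a b p j g)"
  have e: "?n (\<lambda>t. c * u t) j = \<bar>c\<bar> * ?n u j" if j: "j \<le> k" for j
  proof -
    have "?n (\<lambda>t. c * u t) j = Lp_norm {a..b} p (\<lambda>t. c * wD a b p j u t)"
      by (rule Lp_norm_wD_cong[OF sobolev_scale(1)[OF ab p u] j])
         (use Lp_norm_cmult[OF ab p] wD_weak_deriv[OF u j] sobolev_scale(2)[OF ab p u j] in auto)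
    also have "\<dots> = \<bar>c\<bar> * ?n u j"
      using Lp_norm_cmult[OF ab p] wD_weak_deriv[OF u j] by blast
    finally show ?thesis .
  qed
  show ?thesis
  proof (cases "p = \<infinity>")
    case True
    then show ?thesis unfolding sob_norm_def using e by (simp add: sum_distrib_left)
  next
    case False
    let ?P = "enn2real p"
    have P: "1 \<le> ?P" using enn2real_ge_1[OF p False] .
    have "(\<Sum>j\<le>k. ?n (\<lambda>t. c * u t) j powr ?P) = (\<Sum>j\<le>k. \<bar>c\<bar> powr ?P * ?n u j powr ?P)"
      using e Lp_norm_nonneg[OF ab] by (intro sum.cong) (auto simp: powr_mult)
    also have "\<dots> = \<bar>c\<bar> powr ?P * (\<Sum>j\<le>k. ?n u j powr ?P)" by (simp add: sum_distrib_left)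
    finally have "(\<Sum>j\<le>k. ?n (\<lambda>t. c * u t) j powr ?P) powr (1 / ?P)
        = \<bar>c\<bar> * (\<Sum>j\<le>k. ?n u j powr ?P) powr (1 / ?P)"
      using P by (simp add: powr_mult powr_powr sum_nonneg)
    then show ?thesis unfolding sob_norm_def using False by simp
  qed
qed

lemma sob_norm_diff_le:
  fixes a b :: real
  assumes ab: "a < b" and p: "1 \<le> p" and u: "sobolev a b k p u" and v: "sobolev a b k p v"
  shows "sob_norm a b k p (\<lambda>t. u t - v t) \<le> sob_norm a b k p u + sob_norm a b k p v"
proof -
  have v': "sobolev a b k p (\<lambda>t. (-1) * v t)" by (rule sobolev_scale(1)[OF ab p v])
  have "sob_norm a b k p (\<lambda>t. u t + (-1) * v t) \<le> sob_norm a b k p u + sob_norm a b k p (\<lambda>t. (-1) * v t)"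
    by (rule sob_norm_triangle[OF ab p u v'])
  also have "sob_norm a b k p (\<lambda>t. (-1) * v t) = sob_norm a b k p v"
    using sob_norm_cmult[OF ab p v, of "-1"] by simp
  finally show ?thesis by simp
qed

lemma sob_norm_Id_minus_bounded:
  fixes a b :: real
  assumes ab: "a < b" and p: "1 \<le> p" and L: "bounded_linear_sob a b k p L"
  obtains C where "\<And>f. sobolev a b k p f \<Longrightarrow> sob_norm a b k p (\<lambda>t. f t - L f t) \<le> C * sob_norm a b k p f"
proof -
  obtain C where C: "\<And>f. sobolev a b k p f \<Longrightarrow> sob_norm a b k p (L f) \<le> C * sob_norm a b k p f"
    using L by (auto simp: bounded_linear_sob_def)
  have "sob_norm a b k p (\<lambda>t. f t - L f t) \<le> (1 + C) * sob_norm a b k p f" if f: "sobolev a b k p f" for f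
  proof -
    have "sobolev a b k p (L f)" using L f by (simp add: bounded_linear_sob_def)
    then have "sob_norm a b k p (\<lambda>t. f t - L f t) \<le> sob_norm a b k p f + sob_norm a b k p (L f)"
      by (rule sob_norm_diff_le[OF ab p f])
    then show ?thesis using C[OF f] by (simp add: algebra_simps)
  qed
  then show ?thesis by (rule that)
qed

lemma sob_norm_Id_minus_cmult:
  fixes a b :: real
  assumes ab: "a < b" and p: "1 \<le> p" and L: "bounded_linear_sob a b k p L" and f: "sobolev a b k p f"
  shows "sob_norm a b k p (\<lambda>t. c * f t - L (\<lambda>s. c * f s) t) = \<bar>c\<bar> * sob_norm a b k p (\<lambda>t. f t - L f t)"
proof -
  have Ls: "sobolev a b k p (L g)" if "sobolev a b k p g" for g
    using L that by (simp add: bounded_linear_sob_def)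
  have cf: "sobolev a b k p (\<lambda>t. c * f t)" by (rule sobolev_scale(1)[OF ab p f])
  have fL: "sobolev a b k p (\<lambda>t. f t - L f t)" by (rule sobolev_diff[OF ab p f Ls[OF f]])
  have "AE t in lebesgue_on {a..b}. L (\<lambda>s. c * f s + 0 * f s) t = c * L f t + 0 * L f t"
    using L f unfolding bounded_linear_sob_def ae_eq_def by blast
  then have "AE t in lebesgue_on {a..b}. c * f t - L (\<lambda>s. c * f s) t = c * (f t - L f t)"
    by eventually_elim (simp add: right_diff_distrib)
  then have "sob_norm a b k p (\<lambda>t. c * f t - L (\<lambda>s. c * f s) t) = sob_norm a b k p (\<lambda>t. c * (f t - L f t))"
    using sobolev_integrable[OF sobolev_diff[OF ab p cf Ls[OF cf]]]
      sobolev_integrable[OF sobolev_scale(1)[OF ab p fL]]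
    by (intro sob_norm_cong) auto
  also have "\<dots> = \<bar>c\<bar> * sob_norm a b k p (\<lambda>t. f t - L f t)" by (rule sob_norm_cmult[OF ab p fL])
  finally show ?thesis .
qed

lemma sob_norm_Id_minus_le:
  fixes a b :: real
  assumes ab: "a < b" and p: "1 \<le> p" and L: "bounded_linear_sob a b k p L" and f: "sobolev a b k p f"
  shows "sob_norm a b k p (\<lambda>t. f t - L f t) \<le> opnorm_Id_minus a b k p L * sob_norm a b k p f"
proof -
  let ?n = "sob_norm a b k p" and ?S = "{sob_norm a b k p (\<lambda>t. f t - L f t) | f. sobolev a b k p f \<and> sob_norm a b k p f \<le> 1}"
  obtain C where C: "\<And>f. sobolev a b k p f \<Longrightarrow> ?n (\<lambda>t. f t - L f t) \<le> C * ?n f"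
    using sob_norm_Id_minus_bounded[OF ab p L] by blast
  have "bdd_above ?S"
  proof (rule bdd_aboveI)
    fix y assume "y \<in> ?S"
    then obtain g where g: "sobolev a b k p g" "?n g \<le> 1" and y: "y = ?n (\<lambda>t. g t - L g t)" by blast
    have "y \<le> C * ?n g" using C[OF g(1)] y by simp
    also have "\<dots> \<le> \<bar>C\<bar> * ?n g" using sob_norm_nonneg[OF ab] by (intro mult_right_mono) auto
    also have "\<dots> \<le> \<bar>C\<bar>" using g(2) by (simp add: mult_left_le)
    finally show "y \<le> \<bar>C\<bar>" .
  qed
  show ?thesis
  proof (cases "?n f = 0")
    case True
    then show ?thesis using C[OF f] sob_norm_nonneg[OF ab, of k p "\<lambda>t. f t - L f t"] by simp
  next
    case False
    then have s: "?n f > 0" using sob_norm_nonneg[OF ab, of k p f] by linarith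
    define c where "c = 1 / ?n f"
    have "?n (\<lambda>t. c * f t) = 1"
      using sob_norm_cmult[OF ab p f, of c] s by (simp add: c_def)
    then have "?n (\<lambda>t. c * f t - L (\<lambda>s. c * f s) t) \<in> ?S"
      using sobolev_scale(1)[OF ab p f] by fastforce
    then have "?n (\<lambda>t. c * f t - L (\<lambda>s. c * f s) t) \<le> opnorm_Id_minus a b k p L"
      unfolding opnorm_Id_minus_def using \<open>bdd_above ?S\<close> by (rule cSup_upper)
    moreover have "?n (\<lambda>t. c * f t - L (\<lambda>s. c * f s) t) = ?n (\<lambda>t. f t - L f t) / ?n f"
      using sob_norm_Id_minus_cmult[OF ab p L f, of c] s by (simp add: c_def)
    ultimately show ?thesis using s by (simp add: field_simps)
  qed
qed

section \<open>Affine changes of variables\<close>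

lemma affine_mem_interval_iff:
  fixes A D a b s :: real
  assumes "A > 0"
  shows "(D + A * s \<in> {A * a + D..A * b + D}) = (s \<in> {a..b})"
  using assms by (auto simp: mult_le_cancel_left_pos)

lemma indicator_affine_interval:
  fixes A D a b s :: real
  assumes "A > 0"
  shows "(indicator {A * a + D..A * b + D} (D + A * s) :: real) = indicator {a..b} s"
  using affine_mem_interval_iff[OF assms] by (simp add: indicator_def)

lemma integral_affine_interval:
  fixes A D a b :: real and F :: "real \<Rightarrow> real"
  assumes A: "A > 0"
  shows "(\<integral>t. F t \<partial>lebesgue_on {A * a + D..A * b + D}) = A * (\<integral>s. F (A * s + D) \<partial>lebesgue_on {a..b})"
proof -
  have "(\<integral>t. F t \<partial>lebesgue_on {A * a + D..A * b + D}) = (\<integral>t. indicator {A * a + D..A * b + D} t * F t \<partial>lebesgue)"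
    by (subst integral_restrict_space) auto
  also have "\<dots> = \<bar>A\<bar> *\<^sub>R (\<integral>s. indicator {A * a + D..A * b + D} (D + A * s) * F (D + A * s) \<partial>lebesgue)"
    by (rule lebesgue_integral_real_affine) (use A in simp)
  also have "\<dots> = A * (\<integral>s. indicator {a..b} s * F (A * s + D) \<partial>lebesgue)"
    unfolding indicator_affine_interval[OF A] using A by (simp add: add.commute)
  also have "\<dots> = A * (\<integral>s. F (A * s + D) \<partial>lebesgue_on {a..b})"
    by (subst integral_restrict_space) auto
  finally show ?thesis .
qed

lemma integrable_affine_interval_iff:
  fixes A D a b :: real and F :: "real \<Rightarrow> real"
  assumes A: "A > 0"
  shows "integrable (lebesgue_on {A * a + D..A * b + D}) F \<longleftrightarrow> integrable (lebesgue_on {a..b}) (\<lambda>s. F (A * s + D))"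
proof -
  have "integrable (lebesgue_on {A * a + D..A * b + D}) F \<longleftrightarrow> integrable lebesgue (\<lambda>t. indicator {A * a + D..A * b + D} t * F t)"
    by (subst integrable_restrict_space) auto
  also have "\<dots> \<longleftrightarrow> integrable lebesgue (\<lambda>s. indicator {A * a + D..A * b + D} (D + A * s) * F (D + A * s))"
    by (rule lebesgue_integrable_real_affine_iff[symmetric]) (use A in simp)
  also have "\<dots> \<longleftrightarrow> integrable lebesgue (\<lambda>s. indicator {a..b} s * F (A * s + D))"
    unfolding indicator_affine_interval[OF A] by (simp add: add.commute)
  also have "\<dots> \<longleftrightarrow> integrable (lebesgue_on {a..b}) (\<lambda>s. F (A * s + D))"
    by (subst integrable_restrict_space) auto
  finally show ?thesis .
qed

lemma measurable_affine_interval: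
  fixes A D a b :: real and F :: "real \<Rightarrow> real"
  assumes A: "A > 0" and F: "F \<in> borel_measurable (lebesgue_on {A * a + D..A * b + D})"
  shows "(\<lambda>s. F (A * s + D)) \<in> borel_measurable (lebesgue_on {a..b})"
proof -
  have "(\<lambda>t. indicator {A * a + D..A * b + D} t *\<^sub>R F t) \<in> borel_measurable lebesgue"
    using F by (subst (asm) borel_measurable_restrict_space_iff) auto
  then have "(\<lambda>s. indicator {A * a + D..A * b + D} (D + A *\<^sub>R s) *\<^sub>R F (D + A *\<^sub>R s)) \<in> borel_measurable lebesgue"
    by (rule borel_measurable_affine) (use A in simp)
  then have "(\<lambda>s. indicator {a..b} s *\<^sub>R F (A * s + D)) \<in> borel_measurable lebesgue"
    unfolding real_scaleR_def indicator_affine_interval[OF A] by (simp add: add.commute)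
  then show ?thesis by (subst borel_measurable_restrict_space_iff) auto
qed

lemma AE_affine_interval:
  fixes A D a b :: real
  assumes A: "A > 0" and Pm: "{t \<in> space lebesgue. t \<in> {A * a + D..A * b + D} \<longrightarrow> P ((t - D) / A)} \<in> sets lebesgue"
    and ae: "AE s in lebesgue_on {a..b}. P s"
  shows "AE t in lebesgue_on {A * a + D..A * b + D}. P ((t - D) / A)"
proof -
  let ?T = "\<lambda>s. D + A * s"
  have Tm: "?T \<in> lebesgue \<rightarrow>\<^sub>M lebesgue"
    using lebesgue_affine_measurable[where c="\<lambda>x::real. A"] A by simp
  have "AE s in lebesgue. s \<in> {a..b} \<longrightarrow> P s" using ae by (subst (asm) AE_restrict_space_iff) auto
  then have "AE s in lebesgue. ?T s \<in> {A * a + D..A * b + D} \<longrightarrow> P ((?T s - D) / A)"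
    by eventually_elim (use A in \<open>simp add: affine_mem_interval_iff\<close>)
  then have "AE t in distr lebesgue lebesgue ?T. t \<in> {A * a + D..A * b + D} \<longrightarrow> P ((t - D) / A)"
    by (subst AE_distr_iff[OF Tm Pm])
  then have "AE t in density (distr lebesgue lebesgue ?T) (\<lambda>_. ennreal \<bar>A\<bar>). t \<in> {A * a + D..A * b + D} \<longrightarrow> P ((t - D) / A)"
    by (subst AE_density) (auto elim: AE_mp)
  moreover have L: "lebesgue = density (distr lebesgue lebesgue ?T) (\<lambda>_. ennreal \<bar>A\<bar>)"
    by (rule lebesgue_real_affine) (use A in simp)
  ultimately have "AE t in lebesgue. t \<in> {A * a + D..A * b + D} \<longrightarrow> P ((t - D) / A)"
    by (simp only: L[symmetric])
  then show ?thesis by (subst AE_restrict_space_iff) auto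
qed

lemma measurable_affine_inv_interval:
  fixes A D a b :: real and F :: "real \<Rightarrow> real"
  assumes A: "A > 0" and F: "F \<in> borel_measurable (lebesgue_on {a..b})"
  shows "(\<lambda>t. F ((t - D) / A)) \<in> borel_measurable (lebesgue_on {A * a + D..A * b + D})"
proof -
  have e: "{a..b} = {(1/A) * (A * a + D) + (- D / A)..(1/A) * (A * b + D) + (- D / A)}"
    using A by (simp add: field_simps)
  have "(\<lambda>t. F ((1/A) * t + (- D / A))) \<in> borel_measurable (lebesgue_on {A * a + D..A * b + D})"
    by (rule measurable_affine_interval) (use A F e in auto)
  moreover have "(\<lambda>t. F ((1/A) * t + (- D / A))) = (\<lambda>t. F ((t - D) / A))"
    using A by (simp add: field_simps)
  ultimately show ?thesis by simp
qed

lemma AE_abs_compose_affine_le: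
  fixes a b A D e :: real and V :: "real \<Rightarrow> real"
  assumes A: "A > 0" and e: "0 \<le> e" and Vm: "V \<in> borel_measurable (lebesgue_on {a..b})"
    and Vle: "AE s in lebesgue_on {a..b}. \<bar>V s\<bar> \<le> e"
  shows "AE t in lebesgue_on {A * a + D..A * b + D}. \<bar>V ((t - D) / A)\<bar> \<le> e"
proof (rule AE_affine_interval[OF A _ Vle])
  let ?I = "{A * a + D..A * b + D}"
  have "(\<lambda>t. V ((t - D) / A)) \<in> borel_measurable (lebesgue_on ?I)"
    by (rule measurable_affine_inv_interval[OF A Vm])
  then have "(\<lambda>t. indicator ?I t *\<^sub>R V ((t - D) / A)) \<in> borel_measurable lebesgue"
    by (subst (asm) borel_measurable_restrict_space_iff) auto
  then have "{t \<in> space lebesgue. \<bar>indicator ?I t *\<^sub>R V ((t - D) / A)\<bar> \<le> e} \<in> sets lebesgue"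
    by measurable
  moreover have "{t \<in> space lebesgue. t \<in> ?I \<longrightarrow> \<bar>V ((t - D) / A)\<bar> \<le> e}
      = {t \<in> space lebesgue. \<bar>indicator ?I t *\<^sub>R V ((t - D) / A)\<bar> \<le> e}"
    using e by (auto simp: indicator_def)
  ultimately show "{t \<in> space lebesgue. t \<in> ?I \<longrightarrow> \<bar>V ((t - D) / A)\<bar> \<le> e} \<in> sets lebesgue"
    by simp
qed

lemma integrable_on_subinterval:
  fixes a b c d :: real and W :: "real \<Rightarrow> real"
  assumes W: "integrable (lebesgue_on {a..b}) W" and sub: "{c..d} \<subseteq> {a..b}"
  shows "integrable (lebesgue_on {c..d}) W"
proof -
  have "integrable lebesgue (\<lambda>t. indicator {a..b} t *\<^sub>R W t)"
    using W by (subst (asm) integrable_restrict_space) auto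
  then have "integrable lebesgue (\<lambda>t. indicator {c..d} t *\<^sub>R (indicator {a..b} t *\<^sub>R W t))"
    by (rule integrable_mult_indicator[rotated]) simp
  moreover have "(\<lambda>t. indicator {c..d} t *\<^sub>R (indicator {a..b} t *\<^sub>R W t)) = (\<lambda>t. indicator {c..d} t *\<^sub>R W t)"
    using sub by (auto simp: indicator_def)
  ultimately show ?thesis by (subst integrable_restrict_space) auto
qed

lemma measurable_on_subinterval:
  fixes a b c d :: real and W :: "real \<Rightarrow> real"
  assumes W: "W \<in> borel_measurable (lebesgue_on {a..b})" and sub: "{c..d} \<subseteq> {a..b}"
  shows "W \<in> borel_measurable (lebesgue_on {c..d})"
proof -
  have m1: "(\<lambda>t. indicator {a..b} t *\<^sub>R W t) \<in> borel_measurable lebesgue"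
    using W by (subst (asm) borel_measurable_restrict_space_iff) auto
  have m2: "(indicator {c..d} :: real \<Rightarrow> real) \<in> borel_measurable lebesgue"
    by (rule measurable_completion) simp
  have "(\<lambda>t. indicator {c..d} t *\<^sub>R (indicator {a..b} t *\<^sub>R W t)) \<in> borel_measurable lebesgue"
    unfolding real_scaleR_def using borel_measurable_times[OF m2 m1[unfolded real_scaleR_def]] .
  moreover have "(\<lambda>t. indicator {c..d} t *\<^sub>R (indicator {a..b} t *\<^sub>R W t)) = (\<lambda>t. indicator {c..d} t *\<^sub>R W t)"
    using sub by (auto simp: indicator_def)
  ultimately show ?thesis by (subst borel_measurable_restrict_space_iff) auto
qed

lemma integral_on_subinterval_eq:
  fixes a b c d :: real and F :: "real \<Rightarrow> real"
  assumes sub: "{c..d} \<subseteq> {a..b}" and z: "\<And>t. t \<notin> {c..d} \<Longrightarrow> F t = 0"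
  shows "(\<integral>t. F t \<partial>lebesgue_on {c..d}) = (\<integral>t. F t \<partial>lebesgue_on {a..b})"
proof -
  have "(\<lambda>t. indicator {c..d} t *\<^sub>R F t) = (\<lambda>t. indicator {a..b} t *\<^sub>R F t)"
  proof (rule ext)
    fix t show "indicator {c..d} t *\<^sub>R F t = indicator {a..b} t *\<^sub>R F t"
      using sub z[of t] by (cases "t \<in> {c..d}") (auto simp: indicator_def)
  qed
  then show ?thesis by (subst (1 2) integral_restrict_space) auto
qed

lemma integral_powr_abs_rescaled:
  fixes a b A D \<gamma> P :: real and W V :: "real \<Rightarrow> real"
  assumes A: "A > 0" and sub: "a \<le> A * a + D" "A * b + D \<le> b"
    and Wm: "W \<in> borel_measurable (lebesgue_on {a..b})" and Vm: "V \<in> borel_measurable (lebesgue_on {a..b})"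
    and rel: "AE t in lebesgue_on {A * a + D..A * b + D}. W t = \<gamma> * V ((t - D) / A)"
  shows "(\<integral>t. \<bar>W t\<bar> powr P \<partial>lebesgue_on {A * a + D..A * b + D})
       = \<bar>\<gamma>\<bar> powr P * A * (\<integral>s. \<bar>V s\<bar> powr P \<partial>lebesgue_on {a..b})"
proof -
  let ?c = "A * a + D" and ?d = "A * b + D"
  have subs: "{?c..?d} \<subseteq> {a..b}" using sub by auto
  have Wm': "W \<in> borel_measurable (lebesgue_on {?c..?d})" by (rule measurable_on_subinterval[OF Wm subs])
  have Vm': "(\<lambda>t. V ((t - D) / A)) \<in> borel_measurable (lebesgue_on {?c..?d})" by (rule measurable_affine_inv_interval[OF A Vm])
  have "(\<integral>t. \<bar>W t\<bar> powr P \<partial>lebesgue_on {?c..?d}) = (\<integral>t. \<bar>\<gamma>\<bar> powr P * \<bar>V ((t - D) / A)\<bar> powr P \<partial>lebesgue_on {?c..?d})"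
  proof (rule integral_cong_AE)
    show "(\<lambda>t. \<bar>W t\<bar> powr P) \<in> borel_measurable (lebesgue_on {?c..?d})" using Wm' by measurable
    show "(\<lambda>t. \<bar>\<gamma>\<bar> powr P * \<bar>V ((t - D) / A)\<bar> powr P) \<in> borel_measurable (lebesgue_on {?c..?d})"
      using Vm' by measurable
    show "AE t in lebesgue_on {?c..?d}. \<bar>W t\<bar> powr P = \<bar>\<gamma>\<bar> powr P * \<bar>V ((t - D) / A)\<bar> powr P"
      using rel by eventually_elim (simp add: abs_mult powr_mult)
  qed
  also have "\<dots> = \<bar>\<gamma>\<bar> powr P * (\<integral>t. \<bar>V ((t - D) / A)\<bar> powr P \<partial>lebesgue_on {?c..?d})" by simp
  also have "(\<integral>t. \<bar>V ((t - D) / A)\<bar> powr P \<partial>lebesgue_on {?c..?d}) = A * (\<integral>s. \<bar>V s\<bar> powr P \<partial>lebesgue_on {a..b})"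
    by (subst integral_affine_interval[OF A]) (use A in simp)
  finally show ?thesis by (simp add: mult_ac)
qed

lemma weak_deriv_restrict:
  fixes a b c d :: real
  assumes W: "weak_deriv a b j u W" and sub: "a \<le> c" "d \<le> b"
  shows "weak_deriv c d j u W"
  unfolding weak_deriv_def
proof (intro conjI allI impI)
  have subs: "{c..d} \<subseteq> {a..b}" using sub by auto
  show "integrable (lebesgue_on {c..d}) u" "integrable (lebesgue_on {c..d}) W"
    using W integrable_on_subinterval[OF _ subs] by (auto simp: weak_deriv_def)
  fix \<phi> assume \<phi>: "test_fun c d \<phi>"
  have "(\<integral>t. u t * (deriv ^^ j) \<phi> t \<partial>lebesgue_on {c..d}) = (\<integral>t. u t * (deriv ^^ j) \<phi> t \<partial>lebesgue_on {a..b})"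
    using test_fun_higher_deriv_eq_0_outside[OF \<phi>] by (intro integral_on_subinterval_eq[OF subs]) simp
  also have "\<dots> = (-1) ^ j * (\<integral>t. W t * \<phi> t \<partial>lebesgue_on {a..b})"
    using W test_fun_mono[OF \<phi> sub] by (simp add: weak_deriv_def)
  also have "(\<integral>t. W t * \<phi> t \<partial>lebesgue_on {a..b}) = (\<integral>t. W t * \<phi> t \<partial>lebesgue_on {c..d})"
    using test_fun_higher_deriv_eq_0_outside[OF \<phi>, of _ 0]
    by (intro integral_on_subinterval_eq[OF subs, symmetric]) simp
  finally show "(\<integral>t. u t * (deriv ^^ j) \<phi> t \<partial>lebesgue_on {c..d})
      = (-1) ^ j * (\<integral>t. W t * \<phi> t \<partial>lebesgue_on {c..d})" .
qed

lemma weak_deriv_compose_affine: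
  fixes a b A D :: real
  assumes A: "A > 0" and V: "weak_deriv a b j h V"
  shows "weak_deriv (A * a + D) (A * b + D) j (\<lambda>t. h ((t - D) / A)) (\<lambda>t. (1 / A) ^ j * V ((t - D) / A))"
  unfolding weak_deriv_def
proof (intro conjI allI impI)
  have hi: "integrable (lebesgue_on {a..b}) h" and Vi: "integrable (lebesgue_on {a..b}) V"
    using V by (auto simp: weak_deriv_def)
  then show "integrable (lebesgue_on {A * a + D..A * b + D}) (\<lambda>t. h ((t - D) / A))"
    "integrable (lebesgue_on {A * a + D..A * b + D}) (\<lambda>t. (1 / A) ^ j * V ((t - D) / A))"
    using A by (simp_all add: integrable_affine_interval_iff[OF A])
  fix \<phi> assume \<phi>: "test_fun (A * a + D) (A * b + D) \<phi>"
  define \<psi> where "\<psi> s = \<phi> (A * s + D)" for s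
  have \<psi>: "test_fun a b \<psi>" unfolding \<psi>_def by (rule test_fun_compose_affine[OF A \<phi>])
  have \<psi>j: "(deriv ^^ j) \<psi> = (\<lambda>s. A ^ j * (deriv ^^ j) \<phi> (A * s + D))"
    unfolding \<psi>_def using test_fun_differentiable_upto[OF \<phi>] by (intro higher_deriv_compose_affine) auto
  have "(\<integral>t. h ((t - D) / A) * (deriv ^^ j) \<phi> t \<partial>lebesgue_on {A * a + D..A * b + D})
      = A * (\<integral>s. h s * (deriv ^^ j) \<phi> (A * s + D) \<partial>lebesgue_on {a..b})"
    using A by (simp add: integral_affine_interval[OF A])
  also have "\<dots> = A * (1 / A) ^ j * (\<integral>s. h s * (deriv ^^ j) \<psi> s \<partial>lebesgue_on {a..b})"
  proof -
    have "(\<lambda>s. h s * (A ^ j * F s)) = (\<lambda>s. A ^ j * (h s * F s))" for F :: "real \<Rightarrow> real"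
      by (simp add: mult_ac)
    then show ?thesis using A by (simp add: \<psi>j power_one_over)
  qed
  also have "\<dots> = (-1) ^ j * ((1 / A) ^ j * (A * (\<integral>s. V s * \<psi> s \<partial>lebesgue_on {a..b})))"
    using V \<psi> by (simp add: weak_deriv_def)
  also have "A * (\<integral>s. V s * \<psi> s \<partial>lebesgue_on {a..b})
      = (\<integral>t. V ((t - D) / A) * \<phi> t \<partial>lebesgue_on {A * a + D..A * b + D})"
    using A by (simp add: integral_affine_interval[OF A] \<psi>_def)
  finally show "(\<integral>t. h ((t - D) / A) * (deriv ^^ j) \<phi> t \<partial>lebesgue_on {A * a + D..A * b + D})
      = (-1) ^ j * (\<integral>t. (1 / A) ^ j * V ((t - D) / A) * \<phi> t \<partial>lebesgue_on {A * a + D..A * b + D})"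
    by (simp add: mult.assoc)
qed

text \<open>If \<open>u = \<beta> h \<circ> L\<^sup>-\<^sup>1\<close> on the image of the affine map \<open>L s = A s + D\<close>, the chain rule passes to
  weak derivatives there; uniqueness of weak derivatives then identifies them with the global ones.\<close>
lemma wD_rescaled:
  fixes a b A D \<beta> :: real and u h :: "real \<Rightarrow> real"
  assumes ab: "a < b" and A: "A > 0"
    and sub: "a \<le> A * a + D" "A * b + D \<le> b"
    and u: "sobolev a b k p u" and h: "sobolev a b k p h" and j: "j \<le> k"
    and rel: "AE t in lebesgue_on {A * a + D..A * b + D}. u t = \<beta> * h ((t - D) / A)"
  shows "AE t in lebesgue_on {A * a + D..A * b + D}.
           wD a b p j u t = \<beta> * (1 / A) ^ j * wD a b p j h ((t - D) / A)"
proof -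
  let ?I = "{A * a + D..A * b + D}"
  have "weak_deriv (A * a + D) (A * b + D) j (\<lambda>t. h ((t - D) / A))
      (\<lambda>t. (1 / A) ^ j * wD a b p j h ((t - D) / A))"
    using wD_weak_deriv[OF h j] by (intro weak_deriv_compose_affine A) simp
  from weak_deriv_lincomb[OF this this, where c=\<beta> and d=0]
  have rescaled: "weak_deriv (A * a + D) (A * b + D) j (\<lambda>t. \<beta> * h ((t - D) / A))
      (\<lambda>t. \<beta> * (1 / A) ^ j * wD a b p j h ((t - D) / A))"
    by (simp add: mult.assoc)
  have "integrable (lebesgue_on ?I) u"
    using sub by (intro integrable_on_subinterval[OF sobolev_integrable[OF u]]) auto
  moreover have "integrable (lebesgue_on ?I) (\<lambda>t. \<beta> * h ((t - D) / A))"
    using rescaled by (simp add: weak_deriv_def)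
  ultimately have "weak_deriv (A * a + D) (A * b + D) j u = weak_deriv (A * a + D) (A * b + D) j (\<lambda>t. \<beta> * h ((t - D) / A))"
    using rel by (rule weak_deriv_cong)
  with rescaled have "weak_deriv (A * a + D) (A * b + D) j u
      (\<lambda>t. \<beta> * (1 / A) ^ j * wD a b p j h ((t - D) / A))"
    by simp
  moreover have "weak_deriv (A * a + D) (A * b + D) j u (wD a b p j u)"
    using sub by (intro weak_deriv_restrict[OF conjunct1[OF wD_weak_deriv[OF u j]]]) auto
  moreover have "A * a + D < A * b + D" using ab A by simp
  ultimately show ?thesis by (intro weak_deriv_unique) auto
qed

locale interval_partition =
  fixes x :: "nat \<Rightarrow> real" and N :: nat
  assumes N_gt_2: "N > 2"
    and incr: "\<And>i. 1 \<le> i \<Longrightarrow> i < N \<Longrightarrow> x i < x (i+1)"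
begin

lemma x_mono: "1 \<le> i \<Longrightarrow> i \<le> j \<Longrightarrow> j \<le> N \<Longrightarrow> x i \<le> x j"
proof (induction j)
  case (Suc j)
  show ?case
  proof (cases "i = Suc j")
    case False
    then have "x i \<le> x j" using Suc by simp
    also have "x j < x (Suc j)" using incr[of j] Suc.prems False by simp
    finally show ?thesis by simp
  qed simp
qed simp

lemma x_strict_mono: "1 \<le> i \<Longrightarrow> i < j \<Longrightarrow> j \<le> N \<Longrightarrow> x i < x j"
  using incr[of i] x_mono[of "i+1" j] by fastforce

lemma x_first_less_last: "x 1 < x N"
  using x_strict_mono[of 1 N] N_gt_2 by simp

lemma partition_covers:
  assumes "t \<in> {x 1..x N}"
  shows "\<exists>i\<in>{1..N-1}. t \<in> {x i..x (i+1)}"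
proof -
  have "\<exists>i\<in>{1..M-1}. t \<in> {x i..x (i+1)}" if "2 \<le> M" "M \<le> N" "t \<in> {x 1..x M}" for M
    using that
  proof (induction M)
    case (Suc M)
    show ?case
    proof (cases "t \<le> x M \<and> 2 \<le> M")
      case True
      with Suc show ?thesis by force
    next
      case False
      with Suc.prems show ?thesis by (cases "M = 1") (auto intro!: bexI[of _ M])
    qed
  qed simp
  with assms N_gt_2 show ?thesis by simp
qed

lemma piece_in_interval:
  assumes "i \<in> {1..N-1}"
  shows "x 1 \<le> x i" "x (i+1) \<le> x N"
  using assms x_mono[of 1 i] x_mono[of "i+1" N] by auto

lemma aff_a_pos:
  assumes "i \<in> {1..N-1}"
  shows "0 < aff_a x N i"
proof -
  have "x i < x (i+1)" using assms incr by auto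
  then show ?thesis using x_first_less_last by (simp add: aff_a_def)
qed

text \<open>This is where \<open>N > 2\<close> is needed: no piece is the whole interval.\<close>
lemma aff_a_less_1:
  assumes i: "i \<in> {1..N-1}"
  shows "aff_a x N i < 1"
proof -
  have "x (i+1) - x i < x N - x 1"
  proof (cases "i = 1")
    case True
    then show ?thesis using x_strict_mono[of "i+1" N] N_gt_2 by simp
  next
    case False
    then have "x 1 < x i" using x_strict_mono[of 1 i] i by auto
    then show ?thesis using piece_in_interval[OF i] by linarith
  qed
  then show ?thesis using x_first_less_last by (simp add: aff_a_def)
qed

lemma aff_maps_endpoints:
  "aff_a x N i * x 1 + aff_d x N i = x i" "aff_a x N i * x N + aff_d x N i = x (i+1)"
proof -
  have "aff_a x N i * (x N - x 1) = x (i+1) - x i"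
    using x_first_less_last by (simp add: aff_a_def)
  then show "aff_a x N i * x 1 + aff_d x N i = x i" "aff_a x N i * x N + aff_d x N i = x (i+1)"
    unfolding aff_d_def by (simp_all add: algebra_simps)
qed

lemma aff_image_interval: "{aff_a x N i * x 1 + aff_d x N i..aff_a x N i * x N + aff_d x N i} = {x i..x (i+1)}"
  by (simp only: aff_maps_endpoints)

lemma aff_image_subset:
  assumes "i \<in> {1..N-1}"
  shows "x 1 \<le> aff_a x N i * x 1 + aff_d x N i" "aff_a x N i * x N + aff_d x N i \<le> x N"
  unfolding aff_maps_endpoints using piece_in_interval[OF assms] by auto

lemma integral_le_sum_pieces:
  fixes F :: "real \<Rightarrow> real"
  assumes Fi: "integrable (lebesgue_on {x 1..x N}) F" and F0: "\<And>t. 0 \<le> F t"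
  shows "(\<integral>t. F t \<partial>lebesgue_on {x 1..x N}) \<le> (\<Sum>i=1..N-1. (\<integral>t. F t \<partial>lebesgue_on {x i..x (i+1)}))"
proof -
  let ?F = "\<lambda>i t. indicator {x i..x (i+1)} t *\<^sub>R F t"
  have ii: "integrable lebesgue (?F i)" if "i \<in> {1..N-1}" for i
    using integrable_on_subinterval[OF Fi] piece_in_interval[OF that]
    by (subst (asm) integrable_restrict_space) auto
  have "(\<integral>t. F t \<partial>lebesgue_on {x 1..x N}) = (\<integral>t. indicator {x 1..x N} t *\<^sub>R F t \<partial>lebesgue)"
    by (subst integral_restrict_space) auto
  also have "\<dots> \<le> (\<integral>t. (\<Sum>i=1..N-1. ?F i t) \<partial>lebesgue)"
  proof (rule Bochner_Integration.integral_mono)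
    show "integrable lebesgue (\<lambda>t. indicator {x 1..x N} t *\<^sub>R F t)"
      using Fi by (subst (asm) integrable_restrict_space) auto
    show "integrable lebesgue (\<lambda>t. \<Sum>i=1..N-1. ?F i t)"
      using ii by (intro Bochner_Integration.integrable_sum) auto
    fix t
    show "indicator {x 1..x N} t *\<^sub>R F t \<le> (\<Sum>i=1..N-1. ?F i t)"
    proof (cases "t \<in> {x 1..x N}")
      case True
      then obtain i0 where i0: "i0 \<in> {1..N-1}" "t \<in> {x i0..x (i0+1)}"
        using partition_covers by blast
      have "?F i0 t \<le> (\<Sum>i=1..N-1. ?F i t)"
        by (rule member_le_sum[OF i0(1)]) (auto simp: F0 indicator_def)
      then show ?thesis using True i0 by simp
    qed (auto simp: F0 intro: sum_nonneg)
  qed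
  also have "\<dots> = (\<Sum>i=1..N-1. (\<integral>t. ?F i t \<partial>lebesgue))"
    using ii by (intro Bochner_Integration.integral_sum) auto
  also have "\<dots> = (\<Sum>i=1..N-1. (\<integral>t. F t \<partial>lebesgue_on {x i..x (i+1)}))"
    by (intro sum.cong refl) (subst integral_restrict_space, auto)
  finally show ?thesis .
qed

end

section \<open>The contraction estimate\<close>

definition piecewise_rescaled ::
  "(nat \<Rightarrow> real) \<Rightarrow> nat \<Rightarrow> nat \<Rightarrow> ennreal \<Rightarrow> (nat \<Rightarrow> real) \<Rightarrow> (real \<Rightarrow> real) \<Rightarrow> (real \<Rightarrow> real) \<Rightarrow> bool"
  where
  "piecewise_rescaled x N k p \<alpha> u h \<longleftrightarrow>
     (\<forall>i\<in>{1..N-1}. \<forall>j\<le>k. AE t in lebesgue_on {x i..x (i+1)}.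
        wD (x 1) (x N) p j u t = \<alpha> i * (1 / aff_a x N i) ^ j * wD (x 1) (x N) p j h (aff_inv x N i t))"

lemma powr_scaling_le:
  fixes A P :: real
  assumes A: "0 < A" "A \<le> 1" and P: "0 \<le> P" and jk: "j \<le> k"
  shows "((1 / A) ^ j) powr P * A \<le> 1 / A powr (real k * P - 1)"
proof -
  have e1: "(1 / A) ^ j = 1 / A powr (real j)" using A by (simp add: powr_realpow power_one_over)
  have e2: "((1 / A) ^ j) powr P = 1 / A powr (real j * P)"
    unfolding e1 powr_divide using A by (simp add: powr_powr)
  have e3: "A powr (real k * P - 1) = A powr (real k * P) / A"
    using A by (simp add: powr_diff)
  have m: "A powr (real k * P) \<le> A powr (real j * P)"
    using A P jk by (intro powr_mono') (auto intro: mult_right_mono)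
  have pos: "0 < A powr (real k * P)" using A by simp
  have "((1 / A) ^ j) powr P * A = A / A powr (real j * P)" unfolding e2 by simp
  also have "\<dots> \<le> A / A powr (real k * P)"
    using m pos A by (intro divide_left_mono) auto
  also have "\<dots> = 1 / A powr (real k * P - 1)" unfolding e3 using A pos by simp
  finally show ?thesis .
qed

context interval_partition
begin

lemma integral_powr_abs_rescaled_le:
  fixes W V :: "real \<Rightarrow> real" and P :: real
  assumes P: "0 \<le> P" and j: "j \<le> k"
    and Wm: "W \<in> borel_measurable (lebesgue_on {x 1..x N})"
    and Vm: "V \<in> borel_measurable (lebesgue_on {x 1..x N})"
    and Wi: "integrable (lebesgue_on {x 1..x N}) (\<lambda>t. \<bar>W t\<bar> powr P)"
    and rel: "\<And>i. i \<in> {1..N-1} \<Longrightarrow> AE t in lebesgue_on {x i..x (i+1)}.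
        W t = \<alpha> i * (1 / aff_a x N i) ^ j * V (aff_inv x N i t)"
  shows "(\<integral>t. \<bar>W t\<bar> powr P \<partial>lebesgue_on {x 1..x N})
    \<le> (\<Sum>i=1..N-1. \<bar>\<alpha> i\<bar> powr P / aff_a x N i powr (real k * P - 1))
        * (\<integral>t. \<bar>V t\<bar> powr P \<partial>lebesgue_on {x 1..x N})"
proof -
  let ?a = "aff_a x N" and ?IV = "\<integral>t. \<bar>V t\<bar> powr P \<partial>lebesgue_on {x 1..x N}"
  have IV0: "0 \<le> ?IV" by (intro integral_nonneg_AE) auto
  have "(\<integral>t. \<bar>W t\<bar> powr P \<partial>lebesgue_on {x 1..x N})
      \<le> (\<Sum>i=1..N-1. (\<integral>t. \<bar>W t\<bar> powr P \<partial>lebesgue_on {x i..x (i+1)}))"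
    using Wi by (rule integral_le_sum_pieces) simp
  also have "\<dots> = (\<Sum>i=1..N-1. \<bar>\<alpha> i * (1 / ?a i) ^ j\<bar> powr P * ?a i * ?IV)"
  proof (rule sum.cong[OF refl])
    fix i assume i: "i \<in> {1..N-1}"
    have "AE t in lebesgue_on {?a i * x 1 + aff_d x N i..?a i * x N + aff_d x N i}.
        W t = \<alpha> i * (1 / ?a i) ^ j * V ((t - aff_d x N i) / ?a i)"
      using rel[OF i] unfolding aff_image_interval by (simp add: aff_inv_def)
    from integral_powr_abs_rescaled[OF aff_a_pos[OF i] aff_image_subset[OF i] Wm Vm this]
    show "(\<integral>t. \<bar>W t\<bar> powr P \<partial>lebesgue_on {x i..x (i+1)}) = \<bar>\<alpha> i * (1 / ?a i) ^ j\<bar> powr P * ?a i * ?IV"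
      unfolding aff_image_interval .
  qed
  also have "\<dots> \<le> (\<Sum>i=1..N-1. \<bar>\<alpha> i\<bar> powr P / ?a i powr (real k * P - 1) * ?IV)"
  proof (intro sum_mono mult_right_mono IV0)
    fix i assume i: "i \<in> {1..N-1}"
    have "\<bar>\<alpha> i * (1 / ?a i) ^ j\<bar> powr P * ?a i = \<bar>\<alpha> i\<bar> powr P * (((1 / ?a i) ^ j) powr P * ?a i)"
      using aff_a_pos[OF i] by (simp add: abs_mult powr_mult)
    also have "\<dots> \<le> \<bar>\<alpha> i\<bar> powr P * (1 / ?a i powr (real k * P - 1))"
      using powr_scaling_le[OF aff_a_pos[OF i] _ P j] aff_a_less_1[OF i] by (intro mult_left_mono) auto
    finally show "\<bar>\<alpha> i * (1 / ?a i) ^ j\<bar> powr P * ?a i \<le> \<bar>\<alpha> i\<bar> powr P / ?a i powr (real k * P - 1)"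
      by simp
  qed
  also have "\<dots> = (\<Sum>i=1..N-1. \<bar>\<alpha> i\<bar> powr P / ?a i powr (real k * P - 1)) * ?IV"
    by (simp add: sum_distrib_right)
  finally show ?thesis .
qed

lemma sob_norm_le_Kconst_finite:
  assumes p: "1 \<le> p" "p \<noteq> \<infinity>"
    and u: "sobolev (x 1) (x N) k p u" and h: "sobolev (x 1) (x N) k p h"
    and rel: "piecewise_rescaled x N k p \<alpha> u h"
  shows "sob_norm (x 1) (x N) k p u \<le> Kconst x N k p \<alpha> * sob_norm (x 1) (x N) k p h"
proof -
  define P where "P = enn2real p"
  have P: "1 \<le> P" unfolding P_def using enn2real_ge_1[OF p] .
  define S where "S = (\<Sum>i=1..N-1. \<bar>\<alpha> i\<bar> powr P / aff_a x N i powr (real k * P - 1))"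
  have S0: "0 \<le> S" unfolding S_def by (intro sum_nonneg) simp
  define I where "I g j = (\<integral>t. \<bar>wD (x 1) (x N) p j g t\<bar> powr P \<partial>lebesgue_on {x 1..x N})" for g j
  have I0: "0 \<le> I g j" for g j unfolding I_def by (intro integral_nonneg_AE) auto
  have sob: "sob_norm (x 1) (x N) k p g = (\<Sum>j\<le>k. I g j) powr (1 / P)"
    if "sobolev (x 1) (x N) k p g" for g
  proof -
    have "(\<Sum>j\<le>k. Lp_norm {x 1..x N} p (wD (x 1) (x N) p j g) powr P) = (\<Sum>j\<le>k. I g j)"
      using Lp_norm_finite[OF p(2)] wD_weak_deriv[OF that] I0 P
      by (intro sum.cong refl) (simp add: I_def P_def powr_powr)
    then show ?thesis using p by (simp add: sob_norm_def P_def)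
  qed
  have "I u j \<le> S * I h j" if j: "j \<le> k" for j
    unfolding I_def S_def
  proof (rule integral_powr_abs_rescaled_le[OF _ j])
    show "wD (x 1) (x N) p j u \<in> borel_measurable (lebesgue_on {x 1..x N})"
      "wD (x 1) (x N) p j h \<in> borel_measurable (lebesgue_on {x 1..x N})"
      "integrable (lebesgue_on {x 1..x N}) (\<lambda>t. \<bar>wD (x 1) (x N) p j u t\<bar> powr P)"
      using wD_weak_deriv[OF u j] wD_weak_deriv[OF h j] in_Lp_finite_iff[OF p(2)]
      by (auto simp: P_def)
  qed (use P rel j in \<open>auto simp: piecewise_rescaled_def\<close>)
  then have "(\<Sum>j\<le>k. I u j) powr (1 / P) \<le> (S * (\<Sum>j\<le>k. I h j)) powr (1 / P)"
    using P I0 by (intro powr_mono2) (auto intro: sum_nonneg sum_mono simp: sum_distrib_left)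
  also have "\<dots> = S powr (1 / P) * (\<Sum>j\<le>k. I h j) powr (1 / P)"
    using S0 I0 by (simp add: powr_mult sum_nonneg)
  finally show ?thesis using sob[OF u] sob[OF h] p by (simp add: Kconst_def S_def P_def)
qed

lemma AE_abs_rescaled_le:
  fixes W V :: "real \<Rightarrow> real" and e K :: real
  assumes j: "j \<le> k" and e: "0 \<le> e"
    and K: "\<And>i. i \<in> {1..N-1} \<Longrightarrow> \<bar>\<alpha> i\<bar> / aff_a x N i ^ k \<le> K"
    and Vm: "V \<in> borel_measurable (lebesgue_on {x 1..x N})"
    and Vle: "AE s in lebesgue_on {x 1..x N}. \<bar>V s\<bar> \<le> e"
    and rel: "\<And>i. i \<in> {1..N-1} \<Longrightarrow> AE t in lebesgue_on {x i..x (i+1)}.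
        W t = \<alpha> i * (1 / aff_a x N i) ^ j * V (aff_inv x N i t)"
  shows "AE t in lebesgue_on {x 1..x N}. \<bar>W t\<bar> \<le> K * e"
proof -
  have piece: "AE t in lebesgue. t \<in> {x i..x (i+1)} \<longrightarrow> \<bar>W t\<bar> \<le> K * e" if i: "i \<in> {1..N-1}" for i
  proof -
    define A where "A = aff_a x N i"
    define D where "D = aff_d x N i"
    let ?I = "{A * x 1 + D..A * x N + D}"
    have A: "0 < A" "A < 1" using aff_a_pos[OF i] aff_a_less_1[OF i] by (auto simp: A_def)
    have iv: "?I = {x i..x (i+1)}" unfolding A_def D_def by (rule aff_image_interval)
    have Vle': "AE t in lebesgue_on ?I. \<bar>V ((t - D) / A)\<bar> \<le> e"
      by (rule AE_abs_compose_affine_le[OF A(1) e Vm Vle])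
    have rel': "AE t in lebesgue_on ?I. W t = \<alpha> i * (1 / A) ^ j * V ((t - D) / A)"
      using rel[OF i] unfolding iv by (simp add: A_def D_def aff_inv_def)
    have "\<bar>\<alpha> i\<bar> * (1 / A) ^ j \<le> \<bar>\<alpha> i\<bar> * (1 / A) ^ k"
      using A j by (intro mult_left_mono power_increasing) auto
    also have "\<dots> \<le> K" using K[OF i] by (simp add: A_def power_one_over)
    finally have bnd: "\<bar>\<alpha> i\<bar> * (1 / A) ^ j \<le> K" .
    have "AE t in lebesgue_on ?I. \<bar>W t\<bar> \<le> K * e"
      using Vle' rel'
    proof eventually_elim
      case (elim t)
      then have "\<bar>W t\<bar> = \<bar>\<alpha> i\<bar> * (1 / A) ^ j * \<bar>V ((t - D) / A)\<bar>"
        using A by (simp add: abs_mult)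
      also have "\<dots> \<le> K * e"
        using bnd elim e A by (intro mult_mono) (auto intro: order_trans[OF _ bnd])
      finally show ?case .
    qed
    then show ?thesis unfolding iv by (subst (asm) AE_restrict_space_iff) auto
  qed
  have "AE t in lebesgue. \<forall>i\<in>{1..N-1}. t \<in> {x i..x (i+1)} \<longrightarrow> \<bar>W t\<bar> \<le> K * e"
    by (rule AE_finite_allI) (simp, rule piece)
  then have "AE t in lebesgue. t \<in> {x 1..x N} \<longrightarrow> \<bar>W t\<bar> \<le> K * e"
    by eventually_elim (use partition_covers in blast)
  then show ?thesis by (subst AE_restrict_space_iff) auto
qed

lemma sob_norm_le_Kconst_infinite:
  assumes p: "p = \<infinity>"
    and u: "sobolev (x 1) (x N) k p u" and h: "sobolev (x 1) (x N) k p h"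
    and rel: "piecewise_rescaled x N k p \<alpha> u h"
  shows "sob_norm (x 1) (x N) k p u \<le> Kconst x N k p \<alpha> * sob_norm (x 1) (x N) k p h"
proof -
  define K where "K = Kconst x N k p \<alpha>"
  let ?M = "lebesgue_on {x 1..x N}"
  have "Lp_norm {x 1..x N} p (wD (x 1) (x N) p j u) \<le> K * Lp_norm {x 1..x N} p (wD (x 1) (x N) p j h)"
    if j: "j \<le> k" for j
  proof -
    let ?W = "wD (x 1) (x N) p j u" and ?V = "wD (x 1) (x N) p j h"
    have Wm: "?W \<in> borel_measurable ?M" and Vm: "?V \<in> borel_measurable ?M"
      using wD_weak_deriv[OF u j] wD_weak_deriv[OF h j] by (auto intro: in_Lp_measurable)
    have "esssup ?M (\<lambda>t. ereal \<bar>?V t\<bar>) < \<infinity>"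
      using wD_weak_deriv[OF h j] p by (simp add: in_Lp_def)
    then obtain e where E: "esssup ?M (\<lambda>t. ereal \<bar>?V t\<bar>) = ereal e"
      using esssup_abs_nonneg[OF x_first_less_last, of ?V] by (cases "esssup ?M (\<lambda>t. ereal \<bar>?V t\<bar>)") auto
    have e0: "0 \<le> e" using esssup_abs_nonneg[OF x_first_less_last, of ?V] E by simp
    have Vle: "AE s in ?M. \<bar>?V s\<bar> \<le> e" using esssup_AE[of "\<lambda>t. ereal \<bar>?V t\<bar>" ?M] E by simp
    have "AE t in ?M. \<bar>?W t\<bar> \<le> K * e"
    proof (rule AE_abs_rescaled_le[OF j e0 _ Vm Vle])
      show "\<bar>\<alpha> i\<bar> / aff_a x N i ^ k \<le> K" if "i \<in> {1..N-1}" for i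
        using that p by (simp add: K_def Kconst_def)
    qed (use rel j in \<open>auto simp: piecewise_rescaled_def\<close>)
    then have "esssup ?M (\<lambda>t. ereal \<bar>?W t\<bar>) \<le> ereal (K * e)"
      by (intro esssup_I) (use Wm in \<open>auto elim: AE_mp\<close>)
    then have "real_of_ereal (esssup ?M (\<lambda>t. ereal \<bar>?W t\<bar>)) \<le> K * e"
      using real_of_ereal_positive_mono[OF esssup_abs_nonneg[OF x_first_less_last]] by fastforce
    then show ?thesis using p E by (simp add: Lp_norm_def)
  qed
  then have "(\<Sum>j\<le>k. Lp_norm {x 1..x N} p (wD (x 1) (x N) p j u))
      \<le> (\<Sum>j\<le>k. K * Lp_norm {x 1..x N} p (wD (x 1) (x N) p j h))"
    by (intro sum_mono) auto
  then show ?thesis using p by (simp add: sob_norm_def sum_distrib_left K_def)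
qed

lemma sob_norm_le_Kconst:
  assumes "1 \<le> p" "sobolev (x 1) (x N) k p u" "sobolev (x 1) (x N) k p h"
    "piecewise_rescaled x N k p \<alpha> u h"
  shows "sob_norm (x 1) (x N) k p u \<le> Kconst x N k p \<alpha> * sob_norm (x 1) (x N) k p h"
  using assms sob_norm_le_Kconst_finite sob_norm_le_Kconst_infinite by (cases "p = \<infinity>") auto

lemma Kconst_nonneg: "0 \<le> Kconst x N k p \<alpha>"
proof (cases "p = \<infinity>")
  case True
  have one: "1 \<in> {1..N-1}" using N_gt_2 by simp
  then have "\<bar>\<alpha> 1\<bar> / aff_a x N 1 ^ k \<le> Max ((\<lambda>i. \<bar>\<alpha> i\<bar> / aff_a x N i ^ k) ` {1..N-1})"
    by (intro Max_ge) auto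
  moreover have "0 \<le> \<bar>\<alpha> 1\<bar> / aff_a x N 1 ^ k" using aff_a_pos[OF one] by simp
  ultimately show ?thesis using True by (simp add: Kconst_def)
qed (simp add: Kconst_def)

lemma alpha_fractal_piecewise_rescaled:
  assumes p: "1 \<le> p" and L: "bounded_linear_sob (x 1) (x N) k p L"
    and f: "sobolev (x 1) (x N) k p f" and g: "is_alpha_fractal x N k p L \<alpha> f g"
  shows "piecewise_rescaled x N k p \<alpha> (\<lambda>t. g t - f t) (\<lambda>t. g t - L f t)"
  unfolding piecewise_rescaled_def
proof (intro ballI allI impI)
  fix i j assume i: "i \<in> {1..N-1}" and j: "j \<le> k"
  let ?A = "aff_a x N i" and ?D = "aff_d x N i"
  have gs: "sobolev (x 1) (x N) k p g" using g by (simp add: is_alpha_fractal_def)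
  have Lf: "sobolev (x 1) (x N) k p (L f)" using L f by (simp add: bounded_linear_sob_def)
  have "AE t in lebesgue. t \<in> subint x N i \<longrightarrow>
      g t = f t + \<alpha> i * (g (aff_inv x N i t) - L f (aff_inv x N i t))"
    using g i by (simp add: is_alpha_fractal_def)
  moreover have "AE t in lebesgue. t \<noteq> x (i+1)" by (intro AE_completion AE_lborel_singleton)
  ultimately have "AE t in lebesgue. t \<in> {x i..x (i+1)} \<longrightarrow>
      g t - f t = \<alpha> i * (g ((t - ?D) / ?A) - L f ((t - ?D) / ?A))"
    by eventually_elim (auto simp: subint_def aff_inv_def)
  then have "AE t in lebesgue_on {?A * x 1 + ?D..?A * x N + ?D}.
      g t - f t = \<alpha> i * (g ((t - ?D) / ?A) - L f ((t - ?D) / ?A))"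
    unfolding aff_image_interval by (subst AE_restrict_space_iff) auto
  from wD_rescaled[OF x_first_less_last aff_a_pos[OF i] aff_image_subset[OF i]
      sobolev_diff[OF x_first_less_last p gs f] sobolev_diff[OF x_first_less_last p gs Lf] j this]
  show "AE t in lebesgue_on {x i..x (i+1)}. wD (x 1) (x N) p j (\<lambda>t. g t - f t) t
      = \<alpha> i * (1 / ?A) ^ j * wD (x 1) (x N) p j (\<lambda>t. g t - L f t) (aff_inv x N i t)"
    unfolding aff_image_interval aff_inv_def .
qed

end

lemma le_div_one_minus_if_le_mult_add:
  fixes K n M :: real
  assumes "0 \<le> K" "K < 1" "n \<le> K * (n + M)"
  shows "n \<le> K / (1 - K) * M"
  using assms by (simp add: field_simps algebra_simps)

theorem mainTheorem6:
  fixes x :: "nat \<Rightarrow> real" and N k :: nat and p :: ennreal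
    and L :: "(real \<Rightarrow> real) \<Rightarrow> (real \<Rightarrow> real)" and \<alpha> :: "nat \<Rightarrow> real"
    and f g :: "real \<Rightarrow> real"
  assumes N: "N > 2"
    and incr: "\<And>i. 1 \<le> i \<Longrightarrow> i < N \<Longrightarrow> x i < x (i+1)"
    and p: "1 \<le> p"
    and L_bl: "bounded_linear_sob (x 1) (x N) k p L"
    and L_bc: "\<And>h r. sobolev (x 1) (x N) k p h \<Longrightarrow> r < k \<Longrightarrow>
               dval (x 1) (x N) r (L h) (x 1) = dval (x 1) (x N) r h (x 1) \<and>
               dval (x 1) (x N) r (L h) (x N) = dval (x 1) (x N) r h (x N)"
    and K: "Kconst x N k p \<alpha> < 1"
    and f: "sobolev (x 1) (x N) k p f"
    and g: "is_alpha_fractal x N k p L \<alpha> f g"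
  shows "sob_norm (x 1) (x N) k p (\<lambda>t. g t - f t)
         \<le> Kconst x N k p \<alpha> / (1 - Kconst x N k p \<alpha>)
            * opnorm_Id_minus (x 1) (x N) k p L * sob_norm (x 1) (x N) k p f"
  \<comment> \<open>\<open>L_bc\<close> is only needed for the existence of \<open>f\<^sup>\<alpha>\<close>, which is assumed here.\<close>
proof -
  interpret interval_partition x N using N incr by unfold_locales
  let ?norm = "sob_norm (x 1) (x N) k p" and ?K = "Kconst x N k p \<alpha>"
  have gs: "sobolev (x 1) (x N) k p g" using g by (simp add: is_alpha_fractal_def)
  have Lf: "sobolev (x 1) (x N) k p (L f)" using L_bl f by (simp add: bounded_linear_sob_def)
  have "?norm (\<lambda>t. g t - f t) \<le> ?K * ?norm (\<lambda>t. g t - L f t)"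
    using alpha_fractal_piecewise_rescaled[OF p L_bl f g] gs f Lf
    by (intro sob_norm_le_Kconst p sobolev_diff[OF x_first_less_last p])
  moreover have "?norm (\<lambda>t. g t - L f t) \<le> ?norm (\<lambda>t. g t - f t) + ?norm (\<lambda>t. f t - L f t)"
    using sob_norm_triangle[OF x_first_less_last p sobolev_diff[OF x_first_less_last p gs f]
        sobolev_diff[OF x_first_less_last p f Lf]] by simp
  ultimately have "?norm (\<lambda>t. g t - f t) \<le> ?K * (?norm (\<lambda>t. g t - f t) + ?norm (\<lambda>t. f t - L f t))"
    using Kconst_nonneg by (meson mult_left_mono order_trans)
  then have "?norm (\<lambda>t. g t - f t) \<le> ?K / (1 - ?K) * ?norm (\<lambda>t. f t - L f t)"
    using Kconst_nonneg K by (intro le_div_one_minus_if_le_mult_add)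
  also have "\<dots> \<le> ?K / (1 - ?K) * (opnorm_Id_minus (x 1) (x N) k p L * ?norm f)"
    using sob_norm_Id_minus_le[OF x_first_less_last p L_bl f] Kconst_nonneg K by (intro mult_left_mono) auto
  finally show ?thesis by (simp add: mult.assoc)
qed

end
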